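(* Fix $t\in I$. If $N\ge1$, $\lambda_1,\dots,\lambda_N\in\mathbb C$ and $c_1,\dots,c_N\in\mathbb C$ are pairwise distinct with $\sum_{k=1}^N\lambda_k\mathcal E_{c_k,t}=0$ a.s., then $\sum_{k=1}^N\lambda_k c_k\langle X\rangle_t\,\mathcal E_{c_k,t}=0$ a.s. Consequently, the rule $D_t\mathcal E_{c,t}:=c\langle X\rangle_t\mathcal E_{c,t}$ ($c\in\mathbb C$), extended by linearity, gives a well-defined linear operator $D_t:V_t\to V_t$.
   Context: Let $(\Omega,\mathcal F,P)$ be a probability space with a filtration $\{\mathcal F_t\}_{t\in I}$, where $I=[0,T]$ for some $T>0$ or $I=[0,\infty)$. Let $\{X_t\}_{t\in I}$ be a real-valued, square integrable, continuous martingale adapted to $\{\mathcal F_t\}$, with $X_0=0$ a.s., whose quadratic variation $\langle X\rangle_t$ is deterministic. For $c\in\mathbb C$ and $t\in I$ define $\mathcal E_{c,t}:=\exp\!\big(cX_t-\tfrac12 c^2\langle X\rangle_t\big)$, and let $V_t$ be the complex linear span of $\{\mathcal E_{c,t}:c\in\mathbb C\}$. *)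

theory Defs
  imports "HOL-Probability.Probability"
begin

definition time_index :: "real set \<Rightarrow> bool" where
  "time_index I \<longleftrightarrow> (\<exists>T>0. I = {0..T}) \<or> I = {0..}"

definition filtration :: "'a measure \<Rightarrow> real set \<Rightarrow> (real \<Rightarrow> 'a measure) \<Rightarrow> bool" where
  "filtration M I F \<longleftrightarrow>
     (\<forall>t\<in>I. subalgebra M (F t)) \<and>
     (\<forall>s\<in>I. \<forall>t\<in>I. s \<le> t \<longrightarrow> sets (F s) \<subseteq> sets (F t))"

definition martingale ::
  "'a measure \<Rightarrow> real set \<Rightarrow> (real \<Rightarrow> 'a measure) \<Rightarrow> (real \<Rightarrow> 'a \<Rightarrow> real) \<Rightarrow> bool" where
  "martingale M I F X \<longleftrightarrow>
     (\<forall>t\<in>I. X t \<in> borel_measurable (F t)) \<and>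
     (\<forall>t\<in>I. integrable M (X t)) \<and>
     (\<forall>s\<in>I. \<forall>t\<in>I. s \<le> t \<longrightarrow>
        (AE \<omega> in M. real_cond_exp M (F s) (X t) \<omega> = X s \<omega>))"

definition sq_int_cont_martingale ::
  "'a measure \<Rightarrow> real set \<Rightarrow> (real \<Rightarrow> 'a measure) \<Rightarrow> (real \<Rightarrow> 'a \<Rightarrow> real) \<Rightarrow> bool" where
  "sq_int_cont_martingale M I F X \<longleftrightarrow>
     martingale M I F X \<and>
     (\<forall>t\<in>I. integrable M (\<lambda>\<omega>. (X t \<omega>)\<^sup>2)) \<and>
     (AE \<omega> in M. continuous_on I (\<lambda>t. X t \<omega>)) \<and>
     (AE \<omega> in M. X 0 \<omega> = 0)"

text \<open>The quadratic variation (angle bracket) of a continuous square integrable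
  martingale X is the unique continuous, nondecreasing, adapted process A with
  A_0 = 0 such that X^2 - A is a martingale.  Here we express that this process is
  deterministic, i.e. given by a function q : I \<rightarrow> real, so that q t = <X>_t.\<close>
definition deterministic_qv ::
  "'a measure \<Rightarrow> real set \<Rightarrow> (real \<Rightarrow> 'a measure) \<Rightarrow> (real \<Rightarrow> 'a \<Rightarrow> real) \<Rightarrow> (real \<Rightarrow> real) \<Rightarrow> bool" where
  "deterministic_qv M I F X q \<longleftrightarrow>
     q 0 = 0 \<and> continuous_on I q \<and> mono_on I q \<and>
     martingale M I F (\<lambda>t \<omega>. (X t \<omega>)\<^sup>2 - q t)"

definition stoch_exp ::
  "(real \<Rightarrow> 'a \<Rightarrow> real) \<Rightarrow> (real \<Rightarrow> real) \<Rightarrow> complex \<Rightarrow> real \<Rightarrow> 'a \<Rightarrow> complex" where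
  "stoch_exp X q c t \<omega> = exp (c * complex_of_real (X t \<omega>) - c\<^sup>2 * complex_of_real (q t) / 2)"

end

(*
  Write E_{c,t} = e_c(X_t) with the entire function e_c(z) = exp (c z - c^2 <X>_t / 2). A relation
  sum_k l_k E_{c_k,t} = 0 a.s. says that the entire function f = sum_k l_k e_{c_k} vanishes at X_t
  almost surely. If <X>_t = 0 there is nothing to prove. Otherwise X_t is centred Gaussian with
  variance <X>_t (Levy's characterisation), so f vanishes on an uncountable subset of the real line,
  hence everywhere, and so does its derivative sum_k l_k c_k e_{c_k}; multiplied by <X>_t this is the
  image under D_t. Applied to the difference of two representations of the same element of V_t, the
  same argument shows that D_t is well defined.

  The Gaussian law comes from the classical discretisation proof of Levy's theorem. On the grid
  t_j = j t / n put Z_j = exp (i u X_{t_j} + u^2 <X>_{t_j} / 2). Once the sampled path is stopped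
  when it leaves [-K, K], the martingale property of X and of X^2 - <X> shows that
  E [Z_{j+1} - Z_j] is of second order in the increments of <X>, up to the Taylor remainder of
  exp (i u (X_{t_{j+1}} - X_{t_j})). The summed remainders vanish as n -> infinity by continuity of
  the paths and of <X>, and the stopping error vanishes as K -> infinity. Hence E Z_n = 1, that is
  E exp (i u X_t) = exp (- u^2 <X>_t / 2).
*)

theory Submission
  imports Defs "HOL-Complex_Analysis.Complex_Analysis" "HOL-Real_Asymp.Real_Asymp"
begin

section \<open>Bochner integrals and the Taylor remainder of \<open>iexp\<close>\<close>

lemma integrable_bounded_mult:
  fixes f g :: "'a \<Rightarrow> 'b::{real_normed_field,banach,second_countable_topology}"
  assumes "integrable M f" "g \<in> borel_measurable M" "\<And>x. x \<in> space M \<Longrightarrow> norm (g x) \<le> B"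
  shows "integrable M (\<lambda>x. g x * f x)"
proof (rule Bochner_Integration.integrable_bound[where f="\<lambda>x. B * norm (f x)"])
  show "integrable M (\<lambda>x. B * norm (f x))" using assms(1) by simp
  show "(\<lambda>x. g x * f x) \<in> borel_measurable M" using assms(1,2) by measurable
  show "AE x in M. norm (g x * f x) \<le> norm (B * norm (f x))"
  proof (rule AE_I2)
    fix x assume "x \<in> space M"
    then have "norm (g x) \<le> \<bar>B\<bar>" using assms(3) by fastforce
    then show "norm (g x * f x) \<le> norm (B * norm (f x))"
      by (simp add: norm_mult abs_mult mult_right_mono)
  qed
qed

lemma integrable_mult_if_square_integrable:
  fixes f g :: "'a \<Rightarrow> real"
  assumes "f \<in> borel_measurable M" "g \<in> borel_measurable M"
    and "integrable M (\<lambda>x. (f x)\<^sup>2)" "integrable M (\<lambda>x. (g x)\<^sup>2)"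
  shows "integrable M (\<lambda>x. f x * g x)"
proof (rule Bochner_Integration.integrable_bound[where f="\<lambda>x. (f x)\<^sup>2 + (g x)\<^sup>2"])
  show "integrable M (\<lambda>x. (f x)\<^sup>2 + (g x)\<^sup>2)" using assms by simp
  show "(\<lambda>x. f x * g x) \<in> borel_measurable M" using assms by measurable
  have "\<bar>f x * g x\<bar> \<le> (f x)\<^sup>2 + (g x)\<^sup>2" for x
  proof -
    have "2 * (\<bar>f x\<bar> * \<bar>g x\<bar>) \<le> (f x)\<^sup>2 + (g x)\<^sup>2"
      using sum_squares_bound[of "\<bar>f x\<bar>" "\<bar>g x\<bar>"] by (simp add: mult.assoc)
    moreover have "0 \<le> \<bar>f x\<bar> * \<bar>g x\<bar>" by simp
    ultimately show ?thesis unfolding abs_mult by linarith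
  qed
  then show "AE x in M. norm (f x * g x) \<le> norm ((f x)\<^sup>2 + (g x)\<^sup>2)" by simp
qed

lemma integrable_square_diff:
  fixes f g :: "'a \<Rightarrow> real"
  assumes "f \<in> borel_measurable M" "g \<in> borel_measurable M"
    and "integrable M (\<lambda>x. (f x)\<^sup>2)" "integrable M (\<lambda>x. (g x)\<^sup>2)"
  shows "integrable M (\<lambda>x. (f x - g x)\<^sup>2)"
  unfolding power2_diff using integrable_mult_if_square_integrable[OF assms] assms(3,4)
  by (intro Bochner_Integration.integrable_diff Bochner_Integration.integrable_add)
     (auto simp: mult.assoc)

lemma norm_integral_le_integral:
  fixes f :: "'a \<Rightarrow> 'b::{banach,second_countable_topology}"
  assumes "integrable M f" "integrable M g" "\<And>x. x \<in> space M \<Longrightarrow> norm (f x) \<le> g x"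
  shows "norm (\<integral>x. f x \<partial>M) \<le> (\<integral>x. g x \<partial>M)"
  using integral_norm_bound[of M f] integral_mono[OF integrable_norm[OF assms(1)] assms(2,3)]
  by linarith

lemma complex_integral_mult_of_real_eq:
  fixes Y :: "'a \<Rightarrow> complex" and f :: "'a \<Rightarrow> real"
  assumes "integrable M Y" "integrable M (\<lambda>x. Y x * complex_of_real (f x))"
    and "(\<integral>x. Re (Y x) * f x \<partial>M) = c * (\<integral>x. Re (Y x) \<partial>M)"
    and "(\<integral>x. Im (Y x) * f x \<partial>M) = c * (\<integral>x. Im (Y x) \<partial>M)"
  shows "(CLINT x|M. Y x * complex_of_real (f x)) = complex_of_real c * (CLINT x|M. Y x)"
proof (rule complex_eqI)
  show "Re (CLINT x|M. Y x * complex_of_real (f x)) = Re (complex_of_real c * (CLINT x|M. Y x))"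
    using integral_Re[OF assms(1)] integral_Re[OF assms(2)] assms(3) by simp
  show "Im (CLINT x|M. Y x * complex_of_real (f x)) = Im (complex_of_real c * (CLINT x|M. Y x))"
    using integral_Im[OF assms(1)] integral_Im[OF assms(2)] assms(4) by simp
qed

lemma (in sigma_finite_subalgebra) integral_mult_eq_of_real_cond_exp:
  fixes f g h :: "'a \<Rightarrow> real"
  assumes "AE x in M. real_cond_exp M F f x = h x"
    and "integrable M (\<lambda>x. g x * f x)" "g \<in> borel_measurable F"
    and "f \<in> borel_measurable M" "h \<in> borel_measurable M"
  shows "(\<integral>x. g x * f x \<partial>M) = (\<integral>x. g x * h x \<partial>M)"
proof -
  have "(\<integral>x. g x * f x \<partial>M) = (\<integral>x. g x * real_cond_exp M F f x \<partial>M)"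
    using real_cond_exp_intg(2)[OF assms(2,3,4)] by simp
  also have "\<dots> = (\<integral>x. g x * h x \<partial>M)"
  proof (rule integral_cong_AE)
    have "g \<in> borel_measurable M" using assms(3) measurable_from_subalg subalg by blast
    then show "(\<lambda>x. g x * real_cond_exp M F f x) \<in> borel_measurable M"
      "(\<lambda>x. g x * h x) \<in> borel_measurable M"
      using assms(5) by (auto intro: borel_measurable_cond_exp2)
    show "AE x in M. g x * real_cond_exp M F f x = g x * h x"
      using assms(1) by eventually_elim simp
  qed
  finally show ?thesis .
qed

definition iexp_rem :: "real \<Rightarrow> complex" where
  "iexp_rem x = iexp x - (1 + \<i> * complex_of_real x - complex_of_real (x\<^sup>2 / 2))"

lemma iexp_taylor_2:
  "(\<Sum>k\<le>2. (\<i> * complex_of_real x) ^ k / fact k) = 1 + \<i> * complex_of_real x - complex_of_real (x\<^sup>2 / 2)"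
  by (simp add: numeral_2_eq_2 power2_eq_square field_simps)

lemma norm_iexp_rem_le_cube: "cmod (iexp_rem x) \<le> \<bar>x\<bar> ^ 3 / 6"
  using iexp_approx1[of x 2] by (simp add: iexp_rem_def iexp_taylor_2 numeral_3_eq_3)

lemma norm_iexp_rem_le_square: "cmod (iexp_rem x) \<le> x\<^sup>2"
  using iexp_approx2[of x 2] by (simp add: iexp_rem_def iexp_taylor_2)

lemma norm_iexp_rem_mult_le:
  assumes "\<bar>d\<bar> \<le> \<eta>"
  shows "cmod (iexp_rem (u * d)) \<le> \<bar>u\<bar> ^ 3 * \<eta> / 6 * d\<^sup>2"
proof -
  have "\<bar>d\<bar> ^ 3 = \<bar>d\<bar> * d\<^sup>2" by (simp add: power3_eq_cube power2_eq_square abs_mult_self_eq)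
  then have "cmod (iexp_rem (u * d)) \<le> \<bar>u\<bar> ^ 3 * (\<bar>d\<bar> * d\<^sup>2) / 6"
    using norm_iexp_rem_le_cube[of "u * d"] by (simp add: abs_mult power_mult_distrib)
  also have "\<dots> \<le> \<bar>u\<bar> ^ 3 * (\<eta> * d\<^sup>2) / 6"
    using assms by (intro divide_right_mono mult_left_mono mult_right_mono) auto
  finally show ?thesis by simp
qed

lemma iexp_rem_measurable [measurable]: "iexp_rem \<in> borel_measurable borel"
  unfolding iexp_rem_def by (intro borel_measurable_continuous_onI continuous_intros) auto

lemma abs_exp_mult_one_minus_le:
  fixes a :: real
  assumes "0 \<le> a"
  shows "\<bar>exp a * (1 - a) - 1\<bar> \<le> a\<^sup>2 * exp a"
proof -
  have "exp a * (1 - a) \<le> exp a * exp (- a)"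
    using exp_ge_add_one_self[of "- a"] by (intro mult_left_mono) auto
  then have upper: "exp a * (1 - a) \<le> 1" by (simp add: exp_minus)
  have "1 - a + a\<^sup>2 = (1 - a)\<^sup>2 + a" by (simp add: power2_diff)
  then have "0 \<le> 1 - a + a\<^sup>2" using assms zero_le_power2[of "1 - a"] by linarith
  then have "(2 + 2 * a + a\<^sup>2) * (1 - a + a\<^sup>2) \<le> (2 * exp a) * (1 - a + a\<^sup>2)"
    using exp_lower_Taylor_quadratic[OF assms] by (intro mult_right_mono) auto
  moreover have "(2 + 2 * a + a\<^sup>2) * (1 - a + a\<^sup>2) = 2 + a\<^sup>2 + a ^ 3 + a ^ 4"
    by (simp add: power2_eq_square power3_eq_cube power4_eq_xxxx algebra_simps)
  moreover have "0 \<le> a\<^sup>2 + a ^ 3 + a ^ 4" using assms by simp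
  ultimately have "1 - exp a * (1 - a) \<le> a\<^sup>2 * exp a" by (simp add: algebra_simps)
  with upper show ?thesis by linarith
qed

lemma norm_sum_stopped_differences_le:
  fixes z :: "nat \<Rightarrow> complex" and g :: "nat \<Rightarrow> real"
  assumes mono: "\<And>i j. i \<le> j \<Longrightarrow> g j = 1 \<Longrightarrow> g i = 1"
    and g_01: "\<And>j. g j = 0 \<or> g j = 1" and z_bound: "\<And>j. cmod (z j) \<le> B"
  shows "cmod (\<Sum>j<m. complex_of_real (1 - g j) * (z (Suc j) - z j)) \<le> 2 * B * (1 - g m)"
proof -
  \<comment> \<open>the terms vanish as long as \<open>g = 1\<close>, so the sum telescopes to \<open>z m - z k\<close>\<close>
  have "\<exists>k. (\<Sum>j<m'. complex_of_real (1 - g j) * (z (Suc j) - z j)) = z m' - z k" for m'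
  proof (induction m')
    case 0
    then show ?case by (intro exI[of _ 0]) simp
  next
    case (Suc m')
    then obtain k where k: "(\<Sum>j<m'. complex_of_real (1 - g j) * (z (Suc j) - z j)) = z m' - z k"
      by blast
    show ?case
    proof (cases "g m' = 1")
      case True
      then have "\<forall>j\<in>{..<Suc m'}. g j = 1" using mono[of _ m'] by (auto simp: less_Suc_eq_le)
      then show ?thesis by (intro exI[of _ "Suc m'"]) simp
    next
      case False
      then have "g m' = 0" using g_01 by blast
      then show ?thesis using k by (intro exI[of _ k]) simp
    qed
  qed
  then obtain k where k: "(\<Sum>j<m. complex_of_real (1 - g j) * (z (Suc j) - z j)) = z m - z k"
    by blast
  show ?thesis
  proof (cases "g m = 1")
    case True
    then have "\<forall>j\<in>{..<m}. g j = 1" using mono[of _ m] by auto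
    then show ?thesis using True by simp
  next
    case False
    then have "g m = 0" using g_01 by blast
    have "cmod (z m - z k) \<le> cmod (z m) + cmod (z k)" by (rule norm_triangle_ineq4)
    also have "\<dots> \<le> 2 * B" using z_bound[of m] z_bound[of k] by simp
    finally show ?thesis using k \<open>g m = 0\<close> by simp
  qed
qed

lemma power2_sum_lessThan:
  fixes a :: "nat \<Rightarrow> real"
  shows "(\<Sum>i<n. a i)\<^sup>2 = (\<Sum>i<n. a i * (a i + 2 * (\<Sum>j\<in>{i<..<n}. a j)))"
proof (induction n)
  case 0
  then show ?case by simp
next
  case (Suc n)
  have "{n<..<Suc n} = {}" by auto
  then have "(\<Sum>i<Suc n. a i * (a i + 2 * (\<Sum>j\<in>{i<..<Suc n}. a j)))
      = (\<Sum>i<n. a i * (a i + 2 * (\<Sum>j\<in>{i<..<Suc n}. a j))) + a n * a n"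
    by simp
  also have "(\<Sum>i<n. a i * (a i + 2 * (\<Sum>j\<in>{i<..<Suc n}. a j)))
      = (\<Sum>i<n. a i * (a i + 2 * (\<Sum>j\<in>{i<..<n}. a j)) + 2 * a i * a n)"
  proof (intro sum.cong refl)
    fix i assume "i \<in> {..<n}"
    then have "{i<..<Suc n} = insert n {i<..<n}" by auto
    then show "a i * (a i + 2 * (\<Sum>j\<in>{i<..<Suc n}. a j))
        = a i * (a i + 2 * (\<Sum>j\<in>{i<..<n}. a j)) + 2 * a i * a n"
      by (simp add: algebra_simps)
  qed
  also have "\<dots> = (\<Sum>i<n. a i)\<^sup>2 + 2 * (\<Sum>i<n. a i) * a n"
    using Suc by (simp add: sum.distrib sum_distrib_right sum_distrib_left algebra_simps)
  finally show ?case by (simp add: power2_eq_square algebra_simps)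
qed

lemma entire_eq_0_if_uncountable_real_zeros:
  fixes f :: "complex \<Rightarrow> complex"
  assumes hol: "f holomorphic_on UNIV" and unc: "uncountable {x::real. f (complex_of_real x) = 0}"
  shows "f z = 0"
proof -
  define Zc where "Zc = complex_of_real ` {x::real. f (complex_of_real x) = 0}"
  have "\<exists>\<xi>. \<xi> islimpt Zc"
  proof (rule ccontr)
    assume "\<not> (\<exists>\<xi>. \<xi> islimpt Zc)"
    then have "Zc sparse_in UNIV" by (simp add: sparse_in_open)
    then have "countable (UNIV \<inter> Zc)" by (intro sparse_imp_countable) auto
    then have "countable (Re ` Zc)" by simp
    moreover have "Re ` Zc = {x::real. f (complex_of_real x) = 0}"
      unfolding Zc_def by (auto simp: image_image)
    ultimately show False using unc by simp
  qed
  then obtain \<xi> where xi: "\<xi> islimpt Zc" by blast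
  show ?thesis
    by (rule analytic_continuation[OF hol open_UNIV connected_UNIV subset_UNIV UNIV_I xi])
       (auto simp: Zc_def)
qed

lemma has_field_derivative_sum_exp:
  fixes l c :: "nat \<Rightarrow> complex" and Q :: complex
  shows "((\<lambda>z. \<Sum>k\<in>A. l k * exp (c k * z - (c k)\<^sup>2 * Q / 2)) has_field_derivative
          (\<Sum>k\<in>A. l k * c k * exp (c k * z - (c k)\<^sup>2 * Q / 2))) (at z)"
  by (auto intro!: derivative_eq_intros DERIV_sum simp: algebra_simps)

section \<open>Martingales with deterministic quadratic variation\<close>

locale det_qv_martingale = prob_space M for M :: "'a measure" +
  fixes F :: "real \<Rightarrow> 'a measure" and X :: "real \<Rightarrow> 'a \<Rightarrow> real"
    and q :: "real \<Rightarrow> real" and t :: real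
  assumes t_nonneg: "0 \<le> t"
    and subalgebra_F: "\<And>s. 0 \<le> s \<Longrightarrow> s \<le> t \<Longrightarrow> subalgebra M (F s)"
    and sets_F_mono: "\<And>s r. 0 \<le> s \<Longrightarrow> s \<le> r \<Longrightarrow> r \<le> t \<Longrightarrow> sets (F s) \<subseteq> sets (F r)"
    and adapted: "\<And>s. 0 \<le> s \<Longrightarrow> s \<le> t \<Longrightarrow> X s \<in> borel_measurable (F s)"
    and square_integrable: "\<And>s. 0 \<le> s \<Longrightarrow> s \<le> t \<Longrightarrow> integrable M (\<lambda>\<omega>. (X s \<omega>)\<^sup>2)"
    and martingale_X: "\<And>s r. 0 \<le> s \<Longrightarrow> s \<le> r \<Longrightarrow> r \<le> t \<Longrightarrow>
      AE \<omega> in M. real_cond_exp M (F s) (X r) \<omega> = X s \<omega>"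
    and martingale_X_sq: "\<And>s r. 0 \<le> s \<Longrightarrow> s \<le> r \<Longrightarrow> r \<le> t \<Longrightarrow>
      AE \<omega> in M. real_cond_exp M (F s) (\<lambda>\<omega>. (X r \<omega>)\<^sup>2 - q r) \<omega> = (X s \<omega>)\<^sup>2 - q s"
    and continuous_paths: "AE \<omega> in M. continuous_on {0..t} (\<lambda>s. X s \<omega>)"
    and X_0: "AE \<omega> in M. X 0 \<omega> = 0"
    and q_0: "q 0 = 0"
    and continuous_q: "continuous_on {0..t} q"
    and mono_q: "\<And>s r. 0 \<le> s \<Longrightarrow> s \<le> r \<Longrightarrow> r \<le> t \<Longrightarrow> q s \<le> q r"
begin

lemma sigma_finite_subalgebra_F: "0 \<le> s \<Longrightarrow> s \<le> t \<Longrightarrow> sigma_finite_subalgebra M (F s)"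
  by (intro finite_measure_subalgebra_is_sigma_finite)
     (simp add: finite_measure_subalgebra_def finite_measure_subalgebra_axioms_def
        finite_measure_axioms subalgebra_F)

lemma measurable_F_imp_M:
  "0 \<le> s \<Longrightarrow> s \<le> t \<Longrightarrow> f \<in> borel_measurable (F s) \<Longrightarrow> f \<in> borel_measurable M"
  using measurable_from_subalg subalgebra_F by blast

lemma measurable_F_mono:
  assumes "0 \<le> s" "s \<le> r" "r \<le> t" "f \<in> borel_measurable (F s)"
  shows "f \<in> borel_measurable (F r)"
proof -
  have "space (F s) = space (F r)"
    using subalgebra_F[of s] subalgebra_F[of r] assms unfolding subalgebra_def by auto
  then show ?thesis using assms(4) sets_F_mono[OF assms(1-3)] unfolding measurable_def by auto
qed

lemma X_measurable: "0 \<le> s \<Longrightarrow> s \<le> t \<Longrightarrow> X s \<in> borel_measurable M"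
  using measurable_F_imp_M adapted by blast

lemma X_integrable: "0 \<le> s \<Longrightarrow> s \<le> t \<Longrightarrow> integrable M (X s)"
  using square_integrable_imp_integrable[OF X_measurable square_integrable] by simp

lemma q_nonneg: "0 \<le> s \<Longrightarrow> s \<le> t \<Longrightarrow> 0 \<le> q s"
  using mono_q[of 0 s] q_0 by auto

lemma q_t_nonneg: "0 \<le> q t"
  using q_nonneg[OF t_nonneg order_refl] .

lemma integral_bounded_mult_increment:
  assumes "0 \<le> s" "s \<le> r" "r \<le> t" "Y \<in> borel_measurable (F s)"
    and "\<And>\<omega>. \<omega> \<in> space M \<Longrightarrow> \<bar>Y \<omega>\<bar> \<le> B"
  shows "(\<integral>\<omega>. Y \<omega> * (X r \<omega> - X s \<omega>) \<partial>M) = 0"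
proof -
  interpret sigma_finite_subalgebra M "F s" using sigma_finite_subalgebra_F assms by simp
  have r: "0 \<le> r" "r \<le> t" and s: "0 \<le> s" "s \<le> t" using assms by auto
  have Y: "Y \<in> borel_measurable M" using measurable_F_imp_M[OF s assms(4)] .
  have bounded: "norm (Y \<omega>) \<le> B" if "\<omega> \<in> space M" for \<omega> using assms(5) that by simp
  have int_r: "integrable M (\<lambda>\<omega>. Y \<omega> * X r \<omega>)"
    by (rule integrable_bounded_mult[OF X_integrable[OF r] Y bounded])
  have int_s: "integrable M (\<lambda>\<omega>. Y \<omega> * X s \<omega>)"
    by (rule integrable_bounded_mult[OF X_integrable[OF s] Y bounded])
  have "(\<integral>\<omega>. Y \<omega> * X r \<omega> \<partial>M) = (\<integral>\<omega>. Y \<omega> * X s \<omega> \<partial>M)"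
    using integral_mult_eq_of_real_cond_exp[OF martingale_X[OF assms(1-3)] int_r assms(4)]
      X_measurable r s by simp
  then show ?thesis using int_r int_s by (simp add: right_diff_distrib)
qed

lemma integral_bounded_mult_compensated:
  assumes "0 \<le> s" "s \<le> r" "r \<le> t" "Y \<in> borel_measurable (F s)"
    and "\<And>\<omega>. \<omega> \<in> space M \<Longrightarrow> \<bar>Y \<omega>\<bar> \<le> B"
  shows "(\<integral>\<omega>. Y \<omega> * ((X r \<omega>)\<^sup>2 - q r) \<partial>M) = (\<integral>\<omega>. Y \<omega> * ((X s \<omega>)\<^sup>2 - q s) \<partial>M)"
proof -
  interpret sigma_finite_subalgebra M "F s" using sigma_finite_subalgebra_F assms by simp
  have r: "0 \<le> r" "r \<le> t" and s: "0 \<le> s" "s \<le> t" using assms by auto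
  have Y: "Y \<in> borel_measurable M" using measurable_F_imp_M[OF s assms(4)] .
  have "integrable M (\<lambda>\<omega>. Y \<omega> * ((X r \<omega>)\<^sup>2 - q r))"
    using square_integrable[OF r] assms(5)
    by (intro integrable_bounded_mult[OF _ Y, where B=B]) auto
  then show ?thesis
    using integral_mult_eq_of_real_cond_exp[OF martingale_X_sq[OF assms(1-3)] _ assms(4)]
      X_measurable r s by simp
qed

lemma integral_bounded_mult_sq_mono:
  assumes "0 \<le> s" "s \<le> r" "r \<le> t" "Y \<in> borel_measurable (F s)"
    and "\<And>\<omega>. \<omega> \<in> space M \<Longrightarrow> 0 \<le> Y \<omega>" "\<And>\<omega>. \<omega> \<in> space M \<Longrightarrow> \<bar>Y \<omega>\<bar> \<le> B"
  shows "(\<integral>\<omega>. Y \<omega> * (X s \<omega>)\<^sup>2 \<partial>M) \<le> (\<integral>\<omega>. Y \<omega> * (X r \<omega>)\<^sup>2 \<partial>M)"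
proof -
  have r: "0 \<le> r" "r \<le> t" and s: "0 \<le> s" "s \<le> t" using assms by auto
  have Y: "Y \<in> borel_measurable M" using measurable_F_imp_M[OF s assms(4)] .
  have bounded: "norm (Y \<omega>) \<le> B" if "\<omega> \<in> space M" for \<omega> using assms(6) that by simp
  note int_Y = integrable_bounded_mult[OF _ Y bounded]
  have "(\<integral>\<omega>. Y \<omega> * (X r \<omega>)\<^sup>2 \<partial>M) - q r * (\<integral>\<omega>. Y \<omega> \<partial>M)
      = (\<integral>\<omega>. Y \<omega> * (X s \<omega>)\<^sup>2 \<partial>M) - q s * (\<integral>\<omega>. Y \<omega> \<partial>M)"
    using integral_bounded_mult_compensated[OF assms(1-4,6)] int_Y[of "\<lambda>_. 1"]
      int_Y[OF square_integrable[OF r]] int_Y[OF square_integrable[OF s]]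
    by (simp add: right_diff_distrib ac_simps)
  moreover have "q s * (\<integral>\<omega>. Y \<omega> \<partial>M) \<le> q r * (\<integral>\<omega>. Y \<omega> \<partial>M)"
    using mono_q[OF assms(1-3)] assms(5) by (intro mult_right_mono integral_nonneg) auto
  ultimately show ?thesis by linarith
qed

lemma integral_bounded_mult_sq_increment:
  assumes "0 \<le> s" "s \<le> r" "r \<le> t" "Y \<in> borel_measurable (F s)"
    and "\<And>\<omega>. \<omega> \<in> space M \<Longrightarrow> \<bar>Y \<omega>\<bar> \<le> B"
  shows "(\<integral>\<omega>. Y \<omega> * (X r \<omega> - X s \<omega>)\<^sup>2 \<partial>M) = (q r - q s) * (\<integral>\<omega>. Y \<omega> \<partial>M)"
proof -
  interpret sigma_finite_subalgebra M "F s" using sigma_finite_subalgebra_F assms by simp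
  have r: "0 \<le> r" "r \<le> t" and s: "0 \<le> s" "s \<le> t" using assms by auto
  have Y: "Y \<in> borel_measurable M" using measurable_F_imp_M[OF s assms(4)] .
  have bounded: "norm (Y \<omega>) \<le> B" if "\<omega> \<in> space M" for \<omega> using assms(5) that by simp
  note int_Y = integrable_bounded_mult[OF _ Y bounded]
  have int_1: "integrable M Y" using int_Y[of "\<lambda>_. 1"] by simp
  have int_sq_r: "integrable M (\<lambda>\<omega>. Y \<omega> * ((X r \<omega>)\<^sup>2 - q r))"
    using int_Y square_integrable[OF r] by simp
  have int_sq_s: "integrable M (\<lambda>\<omega>. Y \<omega> * (X s \<omega>)\<^sup>2)"
    using int_Y square_integrable[OF s] by simp
  have int_rs: "integrable M (\<lambda>\<omega>. (Y \<omega> * X s \<omega>) * X r \<omega>)"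
    using int_Y[OF integrable_mult_if_square_integrable[OF X_measurable[OF s] X_measurable[OF r]
          square_integrable[OF s] square_integrable[OF r]]]
    by (simp add: ac_simps)
  have "(\<lambda>\<omega>. Y \<omega> * (X r \<omega> - X s \<omega>)\<^sup>2)
    = (\<lambda>\<omega>. Y \<omega> * ((X r \<omega>)\<^sup>2 - q r) - 2 * ((Y \<omega> * X s \<omega>) * X r \<omega>) + Y \<omega> * (X s \<omega>)\<^sup>2 + q r * Y \<omega>)"
    by (auto simp: power2_eq_square algebra_simps)
  then have "(\<integral>\<omega>. Y \<omega> * (X r \<omega> - X s \<omega>)\<^sup>2 \<partial>M)
    = (\<integral>\<omega>. Y \<omega> * ((X r \<omega>)\<^sup>2 - q r) \<partial>M) - 2 * (\<integral>\<omega>. (Y \<omega> * X s \<omega>) * X r \<omega> \<partial>M)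
      + (\<integral>\<omega>. Y \<omega> * (X s \<omega>)\<^sup>2 \<partial>M) + q r * (\<integral>\<omega>. Y \<omega> \<partial>M)"
    using int_1 int_sq_r int_sq_s int_rs by simp
  also have "(\<integral>\<omega>. Y \<omega> * ((X r \<omega>)\<^sup>2 - q r) \<partial>M) = (\<integral>\<omega>. Y \<omega> * ((X s \<omega>)\<^sup>2 - q s) \<partial>M)"
    by (rule integral_bounded_mult_compensated[OF assms])
  also have "\<dots> = (\<integral>\<omega>. Y \<omega> * (X s \<omega>)\<^sup>2 \<partial>M) - q s * (\<integral>\<omega>. Y \<omega> \<partial>M)"
    using int_sq_s int_1 by (simp add: right_diff_distrib ac_simps)
  also have "(\<integral>\<omega>. (Y \<omega> * X s \<omega>) * X r \<omega> \<partial>M) = (\<integral>\<omega>. Y \<omega> * (X s \<omega>)\<^sup>2 \<partial>M)"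
  proof -
    have "(\<lambda>\<omega>. Y \<omega> * X s \<omega>) \<in> borel_measurable (F s)" using assms(4) adapted[OF s] by measurable
    then show ?thesis
      using integral_mult_eq_of_real_cond_exp[OF martingale_X[OF assms(1-3)] int_rs]
        X_measurable r s by (simp add: power2_eq_square ac_simps)
  qed
  finally show ?thesis by (simp add: algebra_simps)
qed

lemma cintegral_bounded_mult_increment:
  assumes "0 \<le> s" "s \<le> r" "r \<le> t" "Y \<in> borel_measurable (F s)"
    and "\<And>\<omega>. \<omega> \<in> space M \<Longrightarrow> cmod (Y \<omega>) \<le> B"
  shows "(CLINT \<omega>|M. Y \<omega> * complex_of_real (X r \<omega> - X s \<omega>)) = 0"
proof -
  have r: "0 \<le> r" "r \<le> t" and s: "0 \<le> s" "s \<le> t" using assms by auto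
  have Y: "Y \<in> borel_measurable M" using measurable_F_imp_M[OF s assms(4)] .
  note int_Y = integrable_bounded_mult[OF _ Y assms(5)]
  have "(CLINT \<omega>|M. Y \<omega> * complex_of_real (X r \<omega> - X s \<omega>)) = complex_of_real 0 * (CLINT \<omega>|M. Y \<omega>)"
  proof (rule complex_integral_mult_of_real_eq)
    show "integrable M Y" using int_Y[of "\<lambda>_. 1"] by simp
    show "integrable M (\<lambda>\<omega>. Y \<omega> * complex_of_real (X r \<omega> - X s \<omega>))"
      using int_Y X_integrable[OF r] X_integrable[OF s] by simp
    show "(\<integral>\<omega>. Re (Y \<omega>) * (X r \<omega> - X s \<omega>) \<partial>M) = 0 * (\<integral>\<omega>. Re (Y \<omega>) \<partial>M)"
      using integral_bounded_mult_increment[OF assms(1-3), of "\<lambda>\<omega>. Re (Y \<omega>)" B] assms(4,5)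
        abs_Re_le_cmod order_trans by simp blast
    show "(\<integral>\<omega>. Im (Y \<omega>) * (X r \<omega> - X s \<omega>) \<partial>M) = 0 * (\<integral>\<omega>. Im (Y \<omega>) \<partial>M)"
      using integral_bounded_mult_increment[OF assms(1-3), of "\<lambda>\<omega>. Im (Y \<omega>)" B] assms(4,5)
        abs_Im_le_cmod order_trans by simp blast
  qed
  then show ?thesis by simp
qed

lemma cintegral_bounded_mult_sq_increment:
  assumes "0 \<le> s" "s \<le> r" "r \<le> t" "Y \<in> borel_measurable (F s)"
    and "\<And>\<omega>. \<omega> \<in> space M \<Longrightarrow> cmod (Y \<omega>) \<le> B"
  shows "(CLINT \<omega>|M. Y \<omega> * complex_of_real ((X r \<omega> - X s \<omega>)\<^sup>2))
    = complex_of_real (q r - q s) * (CLINT \<omega>|M. Y \<omega>)"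
proof (rule complex_integral_mult_of_real_eq)
  have r: "0 \<le> r" "r \<le> t" and s: "0 \<le> s" "s \<le> t" using assms by auto
  have Y: "Y \<in> borel_measurable M" using measurable_F_imp_M[OF s assms(4)] .
  note int_Y = integrable_bounded_mult[OF _ Y assms(5)]
  show "integrable M Y" using int_Y[of "\<lambda>_. 1"] by simp
  show "integrable M (\<lambda>\<omega>. Y \<omega> * complex_of_real ((X r \<omega> - X s \<omega>)\<^sup>2))"
    by (rule int_Y[OF integrable_of_real[OF integrable_square_diff[OF X_measurable[OF r]
        X_measurable[OF s] square_integrable[OF r] square_integrable[OF s]]]])
  show "(\<integral>\<omega>. Re (Y \<omega>) * (X r \<omega> - X s \<omega>)\<^sup>2 \<partial>M) = (q r - q s) * (\<integral>\<omega>. Re (Y \<omega>) \<partial>M)"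
    using integral_bounded_mult_sq_increment[OF assms(1-3), of "\<lambda>\<omega>. Re (Y \<omega>)" B] assms(4,5)
      abs_Re_le_cmod order_trans by simp blast
  show "(\<integral>\<omega>. Im (Y \<omega>) * (X r \<omega> - X s \<omega>)\<^sup>2 \<partial>M) = (q r - q s) * (\<integral>\<omega>. Im (Y \<omega>) \<partial>M)"
    using integral_bounded_mult_sq_increment[OF assms(1-3), of "\<lambda>\<omega>. Im (Y \<omega>)" B] assms(4,5)
      abs_Im_le_cmod order_trans by simp blast
qed

section \<open>One step of the discretised exponential martingale\<close>

definition grid :: "nat \<Rightarrow> nat \<Rightarrow> real" where
  "grid n j = t * real j / real n"

definition incr :: "nat \<Rightarrow> nat \<Rightarrow> 'a \<Rightarrow> real" where
  "incr n j \<omega> = X (grid n (Suc j)) \<omega> - X (grid n j) \<omega>"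

definition qincr :: "nat \<Rightarrow> nat \<Rightarrow> real" where
  "qincr n j = q (grid n (Suc j)) - q (grid n j)"

definition bounded_until :: "nat \<Rightarrow> real \<Rightarrow> nat \<Rightarrow> 'a \<Rightarrow> bool" where
  "bounded_until n K j \<omega> \<longleftrightarrow> (\<forall>i\<le>j. \<bar>X (grid n i) \<omega>\<bar> \<le> K)"

\<comment> \<open>stopping the sampled path on leaving \<open>[-K, K]\<close> makes all integrands below bounded\<close>
definition localizer :: "nat \<Rightarrow> real \<Rightarrow> nat \<Rightarrow> 'a \<Rightarrow> real" where
  "localizer n K j \<omega> = (if bounded_until n K j \<omega> then 1 else 0)"

definition expmart :: "real \<Rightarrow> nat \<Rightarrow> nat \<Rightarrow> 'a \<Rightarrow> complex" where
  "expmart u n j \<omega> = iexp (u * X (grid n j) \<omega>) * complex_of_real (exp (u\<^sup>2 * q (grid n j) / 2))"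

lemma grid_nonneg: "0 \<le> grid n j"
  using t_nonneg by (simp add: grid_def)

lemma grid_le: "j \<le> n \<Longrightarrow> grid n j \<le> t"
proof -
  assume "j \<le> n"
  then have "t * real j \<le> t * real n" using t_nonneg by (intro mult_left_mono) auto
  then show ?thesis unfolding grid_def by (cases "n = 0") (auto simp: divide_le_eq t_nonneg)
qed

lemma grid_mono: "i \<le> j \<Longrightarrow> grid n i \<le> grid n j"
  unfolding grid_def using t_nonneg by (auto intro!: divide_right_mono mult_left_mono)

lemma grid_last: "0 < n \<Longrightarrow> grid n n = t"
  by (simp add: grid_def)

lemma grid_step: "grid n (Suc j) - grid n j = t / real n"
  unfolding grid_def by (simp add: diff_divide_distrib[symmetric] algebra_simps)

lemma X_grid_measurable_F: "i \<le> j \<Longrightarrow> j \<le> n \<Longrightarrow> X (grid n i) \<in> borel_measurable (F (grid n j))"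
  using measurable_F_mono[OF grid_nonneg grid_mono grid_le adapted[OF grid_nonneg]] grid_le
  by (meson order_trans)

lemma X_grid_measurable [measurable]: "j \<le> n \<Longrightarrow> X (grid n j) \<in> borel_measurable M"
  using X_measurable[OF grid_nonneg grid_le] .

lemma localizer_measurable_F: "i \<le> j \<Longrightarrow> j \<le> n \<Longrightarrow> localizer n K i \<in> borel_measurable (F (grid n j))"
proof -
  assume "i \<le> j" "j \<le> n"
  then have [measurable]: "\<And>i'. i' \<in> {..i} \<Longrightarrow> X (grid n i') \<in> borel_measurable (F (grid n j))"
    using X_grid_measurable_F by auto
  show ?thesis unfolding localizer_def[abs_def] bounded_until_def atMost_iff[symmetric] by measurable
qed

lemma localizer_measurable [measurable]: "j \<le> n \<Longrightarrow> localizer n K j \<in> borel_measurable M"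
  using measurable_F_imp_M[OF grid_nonneg grid_le localizer_measurable_F] by blast

lemma expmart_measurable_F: "j \<le> n \<Longrightarrow> expmart u n j \<in> borel_measurable (F (grid n j))"
proof -
  assume "j \<le> n"
  then have [measurable]: "X (grid n j) \<in> borel_measurable (F (grid n j))"
    using X_grid_measurable_F by blast
  show ?thesis unfolding expmart_def[abs_def] by measurable
qed

lemma expmart_measurable [measurable]: "j \<le> n \<Longrightarrow> expmart u n j \<in> borel_measurable M"
  using measurable_F_imp_M[OF grid_nonneg grid_le expmart_measurable_F] by blast

lemma incr_measurable [measurable]: "j < n \<Longrightarrow> incr n j \<in> borel_measurable M"
  unfolding incr_def[abs_def] by measurable

lemma localizer_01: "localizer n K j \<omega> = 0 \<or> localizer n K j \<omega> = 1"
  by (simp add: localizer_def)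

lemma localizer_nonneg: "0 \<le> localizer n K j \<omega>"
  by (simp add: localizer_def)

lemma localizer_le_1: "localizer n K j \<omega> \<le> 1"
  by (simp add: localizer_def)

lemma abs_localizer_le_1: "\<bar>localizer n K j \<omega>\<bar> \<le> 1"
  by (simp add: localizer_def)

lemma localizer_antimono: "i \<le> j \<Longrightarrow> localizer n K j \<omega> = 1 \<Longrightarrow> localizer n K i \<omega> = 1"
  by (auto simp: localizer_def bounded_until_def split: if_splits)

lemma localizer_integrable: "j \<le> n \<Longrightarrow> integrable M (localizer n K j)"
  by (rule integrable_const_bound[where B=1]) (auto simp: localizer_def)

lemma qincr_nonneg: "j < n \<Longrightarrow> 0 \<le> qincr n j"
  unfolding qincr_def using mono_q[OF grid_nonneg grid_mono[of j "Suc j"] grid_le[of "Suc j" n]]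
  by auto

lemma qincr_le: "j < n \<Longrightarrow> qincr n j \<le> q t"
  using mono_q[OF grid_nonneg grid_le[of "Suc j" n]] q_nonneg[OF grid_nonneg grid_le[of j n]]
  unfolding qincr_def by fastforce

lemma sum_qincr: "0 < n \<Longrightarrow> (\<Sum>j<n. qincr n j) = q t"
  unfolding qincr_def using sum_lessThan_telescope[of "\<lambda>j. q (grid n j)" n] grid_last[of n] q_0
  by (simp add: grid_def)

lemma incr_integrable_sq: "j < n \<Longrightarrow> integrable M (\<lambda>\<omega>. (incr n j \<omega>)\<^sup>2)"
  unfolding incr_def
  by (intro integrable_square_diff X_measurable square_integrable grid_nonneg grid_le) auto

lemma norm_expmart_le: "j \<le> n \<Longrightarrow> cmod (expmart u n j \<omega>) \<le> exp (u\<^sup>2 * q t / 2)"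
  using mono_q[OF grid_nonneg grid_le, of j n] unfolding expmart_def
  by (simp add: norm_mult mult_left_mono divide_right_mono)

lemma expmart_Suc:
  "expmart u n (Suc j) \<omega>
    = expmart u n j \<omega> * iexp (u * incr n j \<omega>) * complex_of_real (exp (u\<^sup>2 * qincr n j / 2))"
proof -
  have "iexp (u * X (grid n (Suc j)) \<omega>) = iexp (u * X (grid n j) \<omega>) * iexp (u * incr n j \<omega>)"
    by (simp add: incr_def algebra_simps exp_add[symmetric])
  moreover have "exp (u\<^sup>2 * q (grid n (Suc j)) / 2) = exp (u\<^sup>2 * q (grid n j) / 2) * exp (u\<^sup>2 * qincr n j / 2)"
    by (simp add: qincr_def field_simps exp_add[symmetric])
  ultimately show ?thesis unfolding expmart_def by (simp add: algebra_simps)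
qed

lemma cintegral_expmart_0: "(CLINT \<omega>|M. expmart u n 0 \<omega>) = 1"
proof -
  have "(CLINT \<omega>|M. expmart u n 0 \<omega>) = (CLINT \<omega>|M. 1)"
  proof (rule integral_cong_AE)
    show "expmart u n 0 \<in> borel_measurable M" by measurable
    show "AE \<omega> in M. expmart u n 0 \<omega> = 1"
      using X_0 by eventually_elim (simp add: expmart_def grid_def q_0)
  qed simp
  then show ?thesis by (simp add: prob_space)
qed

lemma cintegral_expmart_last:
  "0 < n \<Longrightarrow> (CLINT \<omega>|M. expmart u n n \<omega>)
    = (CLINT \<omega>|M. iexp (u * X t \<omega>)) * complex_of_real (exp (u\<^sup>2 * q t / 2))"
  by (simp add: expmart_def grid_last)

lemma incr_integrable: "j < n \<Longrightarrow> integrable M (incr n j)"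
  using square_integrable_imp_integrable[OF incr_measurable incr_integrable_sq] .

lemma iexp_rem_incr_integrable: "j < n \<Longrightarrow> integrable M (\<lambda>\<omega>. iexp_rem (u * incr n j \<omega>))"
proof (rule Bochner_Integration.integrable_bound[where f="\<lambda>\<omega>. u\<^sup>2 * (incr n j \<omega>)\<^sup>2"])
  assume "j < n"
  then show "integrable M (\<lambda>\<omega>. u\<^sup>2 * (incr n j \<omega>)\<^sup>2)"
    "(\<lambda>\<omega>. iexp_rem (u * incr n j \<omega>)) \<in> borel_measurable M"
    using incr_integrable_sq by auto
  show "AE \<omega> in M. norm (iexp_rem (u * incr n j \<omega>)) \<le> norm (u\<^sup>2 * (incr n j \<omega>)\<^sup>2)"
    using norm_iexp_rem_le_square[of "u * incr n j _"] by (intro AE_I2) (simp add: power_mult_distrib)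
qed

definition localized_expmart :: "real \<Rightarrow> nat \<Rightarrow> real \<Rightarrow> nat \<Rightarrow> 'a \<Rightarrow> complex" where
  "localized_expmart u n K j \<omega> = complex_of_real (localizer n K j \<omega>) * expmart u n j \<omega>"

lemma localized_expmart_measurable_F:
  "j \<le> n \<Longrightarrow> localized_expmart u n K j \<in> borel_measurable (F (grid n j))"
proof -
  assume "j \<le> n"
  then have [measurable]: "localizer n K j \<in> borel_measurable (F (grid n j))"
      "expmart u n j \<in> borel_measurable (F (grid n j))"
    using localizer_measurable_F expmart_measurable_F by auto
  show ?thesis unfolding localized_expmart_def[abs_def] by measurable
qed

lemma localized_expmart_measurable [measurable]:
  "j \<le> n \<Longrightarrow> localized_expmart u n K j \<in> borel_measurable M"
  using measurable_F_imp_M[OF grid_nonneg grid_le localized_expmart_measurable_F] by blast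

lemma norm_localized_expmart_le:
  "j \<le> n \<Longrightarrow> cmod (localized_expmart u n K j \<omega>) \<le> exp (u\<^sup>2 * q t / 2) * localizer n K j \<omega>"
  using norm_expmart_le[of j n u \<omega>] localizer_01[of n K j \<omega>]
  by (auto simp: localized_expmart_def norm_mult)

lemma norm_localized_expmart_le_exp:
  "j \<le> n \<Longrightarrow> cmod (localized_expmart u n K j \<omega>) \<le> exp (u\<^sup>2 * q t / 2)"
  using norm_localized_expmart_le[of j n u K \<omega>] localizer_le_1[of n K j \<omega>]
  by (meson exp_ge_zero mult_left_le order_trans)

lemma localized_expmart_step_eq:
  fixes u :: real and n j :: nat
  defines "a \<equiv> u\<^sup>2 * qincr n j / 2"
  shows "complex_of_real (localizer n K j \<omega>) * (expmart u n (Suc j) \<omega> - expmart u n j \<omega>)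
    = localized_expmart u n K j \<omega> * complex_of_real (exp a - 1)
      + \<i> * complex_of_real (u * exp a) * (localized_expmart u n K j \<omega> * complex_of_real (incr n j \<omega>))
      - complex_of_real (exp a * u\<^sup>2 / 2)
        * (localized_expmart u n K j \<omega> * complex_of_real ((incr n j \<omega>)\<^sup>2))
      + complex_of_real (exp a) * (localized_expmart u n K j \<omega> * iexp_rem (u * incr n j \<omega>))"
proof -
  have taylor: "iexp (u * incr n j \<omega>) = 1 + \<i> * complex_of_real (u * incr n j \<omega>)
      - complex_of_real ((u * incr n j \<omega>)\<^sup>2 / 2) + iexp_rem (u * incr n j \<omega>)"
    by (simp add: iexp_rem_def)
  show ?thesis
    unfolding expmart_Suc taylor localized_expmart_def a_def by (simp add: algebra_simps power2_eq_square)
qed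

lemma cintegral_localized_step:
  fixes u :: real
  assumes "j < n"
  defines "a \<equiv> u\<^sup>2 * qincr n j / 2"
  shows "(CLINT \<omega>|M. complex_of_real (localizer n K j \<omega>) * (expmart u n (Suc j) \<omega> - expmart u n j \<omega>))
    = (CLINT \<omega>|M. localized_expmart u n K j \<omega>) * complex_of_real (exp a * (1 - a) - 1)
      + complex_of_real (exp a) * (CLINT \<omega>|M. localized_expmart u n K j \<omega> * iexp_rem (u * incr n j \<omega>))"
proof -
  let ?Y = "localized_expmart u n K j"
  have s: "0 \<le> grid n j" "grid n j \<le> grid n (Suc j)" "grid n (Suc j) \<le> t"
    using grid_nonneg grid_mono[of j "Suc j"] grid_le[of "Suc j" n] assms(1) by auto
  have Y_F: "?Y \<in> borel_measurable (F (grid n j))"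
    using localized_expmart_measurable_F assms(1) by simp
  have Y_bound: "cmod (?Y \<omega>) \<le> exp (u\<^sup>2 * q t / 2)" for \<omega>
    using norm_localized_expmart_le_exp assms(1) by simp
  note int_Y = integrable_bounded_mult[OF _ localized_expmart_measurable Y_bound]
  have incr_zero: "(CLINT \<omega>|M. ?Y \<omega> * complex_of_real (incr n j \<omega>)) = 0"
    using cintegral_bounded_mult_increment[OF s Y_F Y_bound] unfolding incr_def .
  have incr_sq: "(CLINT \<omega>|M. ?Y \<omega> * complex_of_real ((incr n j \<omega>)\<^sup>2))
      = complex_of_real (qincr n j) * (CLINT \<omega>|M. ?Y \<omega>)"
    using cintegral_bounded_mult_sq_increment[OF s Y_F Y_bound] unfolding incr_def qincr_def .
  have "(CLINT \<omega>|M. complex_of_real (localizer n K j \<omega>) * (expmart u n (Suc j) \<omega> - expmart u n j \<omega>))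
    = (CLINT \<omega>|M. ?Y \<omega>) * complex_of_real (exp a - 1)
      + \<i> * complex_of_real (u * exp a) * (CLINT \<omega>|M. ?Y \<omega> * complex_of_real (incr n j \<omega>))
      - complex_of_real (exp a * u\<^sup>2 / 2) * (CLINT \<omega>|M. ?Y \<omega> * complex_of_real ((incr n j \<omega>)\<^sup>2))
      + complex_of_real (exp a) * (CLINT \<omega>|M. ?Y \<omega> * iexp_rem (u * incr n j \<omega>))"
    unfolding localized_expmart_step_eq
    using int_Y[of "\<lambda>_. 1"] int_Y[OF integrable_of_real[OF incr_integrable_sq]]
      int_Y[OF iexp_rem_incr_integrable] int_Y[OF integrable_of_real[OF incr_integrable]] assms(1)
    by (simp add: a_def)
  also have "\<dots> = (CLINT \<omega>|M. ?Y \<omega>) * complex_of_real (exp a * (1 - a) - 1)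
      + complex_of_real (exp a) * (CLINT \<omega>|M. ?Y \<omega> * iexp_rem (u * incr n j \<omega>))"
    unfolding incr_zero incr_sq a_def by (simp add: algebra_simps)
  finally show ?thesis .
qed

lemma norm_cintegral_localized_expmart_iexp_rem_le:
  assumes "j < n"
  shows "cmod (CLINT \<omega>|M. localized_expmart u n K j \<omega> * iexp_rem (u * incr n j \<omega>))
    \<le> exp (u\<^sup>2 * q t / 2) * (\<integral>\<omega>. localizer n K j \<omega> * cmod (iexp_rem (u * incr n j \<omega>)) \<partial>M)"
proof -
  have "cmod (CLINT \<omega>|M. localized_expmart u n K j \<omega> * iexp_rem (u * incr n j \<omega>))
    \<le> (\<integral>\<omega>. exp (u\<^sup>2 * q t / 2) * (localizer n K j \<omega> * cmod (iexp_rem (u * incr n j \<omega>))) \<partial>M)"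
  proof (rule norm_integral_le_integral)
    show "integrable M (\<lambda>\<omega>. localized_expmart u n K j \<omega> * iexp_rem (u * incr n j \<omega>))"
      using assms norm_localized_expmart_le_exp
      by (intro integrable_bounded_mult[where B="exp (u\<^sup>2 * q t / 2)"] iexp_rem_incr_integrable) auto
    show "integrable M (\<lambda>\<omega>. exp (u\<^sup>2 * q t / 2) * (localizer n K j \<omega> * cmod (iexp_rem (u * incr n j \<omega>))))"
      using assms iexp_rem_incr_integrable
      by (intro integrable_mult_right integrable_bounded_mult[where B=1]) (auto simp: abs_localizer_le_1)
    show "cmod (localized_expmart u n K j \<omega> * iexp_rem (u * incr n j \<omega>))
        \<le> exp (u\<^sup>2 * q t / 2) * (localizer n K j \<omega> * cmod (iexp_rem (u * incr n j \<omega>)))" for \<omega>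
      using mult_right_mono[OF norm_localized_expmart_le norm_ge_zero, of j n u K \<omega>
          "iexp_rem (u * incr n j \<omega>)"] assms
      by (simp add: norm_mult mult.assoc)
  qed
  then show ?thesis by simp
qed

lemma norm_cintegral_localized_step_le:
  fixes u :: real
  assumes "j < n"
  defines "B \<equiv> exp (u\<^sup>2 * q t / 2)"
  shows "cmod (CLINT \<omega>|M. complex_of_real (localizer n K j \<omega>) * (expmart u n (Suc j) \<omega> - expmart u n j \<omega>))
    \<le> B\<^sup>2 * (u\<^sup>2 * qincr n j / 2)\<^sup>2
      + B\<^sup>2 * (\<integral>\<omega>. localizer n K j \<omega> * cmod (iexp_rem (u * incr n j \<omega>)) \<partial>M)"
proof -
  define a where "a = u\<^sup>2 * qincr n j / 2"
  let ?Y = "localized_expmart u n K j" and ?R = "\<integral>\<omega>. localizer n K j \<omega> * cmod (iexp_rem (u * incr n j \<omega>)) \<partial>M"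
  have a_nonneg: "0 \<le> a" unfolding a_def using qincr_nonneg[OF assms(1)] by simp
  have exp_a: "exp a \<le> B"
    using qincr_le[OF assms(1)] unfolding a_def B_def by (simp add: mult_left_mono divide_right_mono)
  have "cmod (CLINT \<omega>|M. ?Y \<omega>) \<le> (\<integral>\<omega>. B \<partial>M)"
    using norm_localized_expmart_le_exp[of j n u K] assms(1)
    by (intro norm_integral_le_integral integrable_const_bound[where B=B]) (auto simp: B_def)
  then have norm_Y: "cmod (CLINT \<omega>|M. ?Y \<omega>) \<le> B" by (simp add: prob_space)
  have "\<bar>exp a * (1 - a) - 1\<bar> \<le> a\<^sup>2 * B"
    using abs_exp_mult_one_minus_le[OF a_nonneg] mult_left_mono[OF exp_a, of "a\<^sup>2"] by simp
  then have "cmod (CLINT \<omega>|M. ?Y \<omega>) * \<bar>exp a * (1 - a) - 1\<bar> \<le> B * (a\<^sup>2 * B)"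
    using norm_Y by (intro mult_mono) (auto simp: B_def)
  moreover have "exp a * cmod (CLINT \<omega>|M. ?Y \<omega> * iexp_rem (u * incr n j \<omega>)) \<le> B * (B * ?R)"
    using exp_a norm_cintegral_localized_expmart_iexp_rem_le[OF assms(1), of u K]
    by (intro mult_mono) (auto simp: B_def)
  moreover have "cmod (CLINT \<omega>|M. complex_of_real (localizer n K j \<omega>) * (expmart u n (Suc j) \<omega> - expmart u n j \<omega>))
    \<le> cmod (CLINT \<omega>|M. ?Y \<omega>) * \<bar>exp a * (1 - a) - 1\<bar>
      + exp a * cmod (CLINT \<omega>|M. ?Y \<omega> * iexp_rem (u * incr n j \<omega>))"
    unfolding cintegral_localized_step[OF assms(1)] a_def[symmetric]
    by (rule order_trans[OF norm_triangle_ineq]) (simp only: norm_mult norm_of_real abs_exp_cancel order_refl)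
  ultimately show ?thesis unfolding a_def by (simp add: power2_eq_square algebra_simps)
qed

lemma norm_sum_unlocalized_steps_le:
  "cmod (\<Sum>j<n. complex_of_real (1 - localizer n K j \<omega>) * (expmart u n (Suc j) \<omega> - expmart u n j \<omega>))
    \<le> 2 * exp (u\<^sup>2 * q t / 2) * (1 - localizer n K n \<omega>)"
proof -
  have "(\<Sum>j<n. complex_of_real (1 - localizer n K j \<omega>) * (expmart u n (Suc j) \<omega> - expmart u n j \<omega>))
    = (\<Sum>j<n. complex_of_real (1 - localizer n K j \<omega>)
        * (expmart u n (min (Suc j) n) \<omega> - expmart u n (min j n) \<omega>))"
    by (intro sum.cong) auto
  also have "cmod \<dots> \<le> 2 * exp (u\<^sup>2 * q t / 2) * (1 - localizer n K n \<omega>)"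
    by (rule norm_sum_stopped_differences_le)
       (auto simp: localizer_antimono localizer_01 intro: norm_expmart_le)
  finally show ?thesis .
qed

lemma norm_cintegral_expmart_sub_localized_le:
  fixes u K :: real and n :: nat
  defines "D \<equiv> \<lambda>j \<omega>. expmart u n (Suc j) \<omega> - expmart u n j \<omega>"
  shows "cmod ((CLINT \<omega>|M. expmart u n n \<omega>) - 1
      - (\<Sum>j<n. CLINT \<omega>|M. complex_of_real (localizer n K j \<omega>) * D j \<omega>))
    \<le> 2 * exp (u\<^sup>2 * q t / 2) * (\<integral>\<omega>. 1 - localizer n K n \<omega> \<partial>M)"
proof -
  define W where "W = (\<lambda>\<omega>. \<Sum>j<n. complex_of_real (1 - localizer n K j \<omega>) * D j \<omega>)"
  have int_Z: "integrable M (expmart u n j)" if "j \<le> n" for j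
    using that norm_expmart_le by (intro integrable_const_bound[where B="exp (u\<^sup>2 * q t / 2)"]) auto
  have int_D: "integrable M (D j)" if "j < n" for j
    unfolding D_def using that by (intro Bochner_Integration.integrable_diff int_Z) auto
  have loc: "(\<lambda>\<omega>. complex_of_real (localizer n K j \<omega>)) \<in> borel_measurable M"
    "(\<lambda>\<omega>. complex_of_real (1 - localizer n K j \<omega>)) \<in> borel_measurable M" if "j \<le> n" for j
    using that by simp_all
  have int_loc: "integrable M (\<lambda>\<omega>. complex_of_real (localizer n K j \<omega>) * D j \<omega>)" if "j < n" for j
    using that loc by (intro integrable_bounded_mult[OF int_D, where B=1]) (auto simp: localizer_def)
  have int_W: "integrable M W"
    unfolding W_def using int_D loc
    by (intro Bochner_Integration.integrable_sum integrable_bounded_mult[where B=1])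
       (auto simp: localizer_def)
  have "expmart u n n \<omega> - expmart u n 0 \<omega>
      = (\<Sum>j<n. complex_of_real (localizer n K j \<omega>) * D j \<omega>) + W \<omega>" for \<omega>
  proof -
    have "expmart u n n \<omega> - expmart u n 0 \<omega> = (\<Sum>j<n. D j \<omega>)"
      unfolding D_def by (rule sum_lessThan_telescope[symmetric])
    then show ?thesis unfolding W_def sum.distrib[symmetric] by (simp add: algebra_simps)
  qed
  then have "(CLINT \<omega>|M. expmart u n n \<omega> - expmart u n 0 \<omega>)
      = (CLINT \<omega>|M. (\<Sum>j<n. complex_of_real (localizer n K j \<omega>) * D j \<omega>) + W \<omega>)"
    by simp
  then have "(CLINT \<omega>|M. expmart u n n \<omega>) - 1
      = (CLINT \<omega>|M. (\<Sum>j<n. complex_of_real (localizer n K j \<omega>) * D j \<omega>) + W \<omega>)"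
    using int_Z[of n] int_Z[of 0] cintegral_expmart_0[of u n] by simp
  also have "\<dots> = (\<Sum>j<n. CLINT \<omega>|M. complex_of_real (localizer n K j \<omega>) * D j \<omega>) + (CLINT \<omega>|M. W \<omega>)"
    using int_loc int_W
    by (subst Bochner_Integration.integral_add)
       (auto intro!: Bochner_Integration.integrable_sum simp: Bochner_Integration.integral_sum)
  finally have "(CLINT \<omega>|M. expmart u n n \<omega>) - 1
      - (\<Sum>j<n. CLINT \<omega>|M. complex_of_real (localizer n K j \<omega>) * D j \<omega>) = (CLINT \<omega>|M. W \<omega>)"
    by simp
  moreover have "cmod (CLINT \<omega>|M. W \<omega>) \<le> (\<integral>\<omega>. 2 * exp (u\<^sup>2 * q t / 2) * (1 - localizer n K n \<omega>) \<partial>M)"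
    using int_W localizer_integrable[of n n K] norm_sum_unlocalized_steps_le
    unfolding W_def D_def by (intro norm_integral_le_integral) auto
  ultimately show ?thesis by simp
qed

section \<open>Summing the Taylor remainders\<close>

definition exit_step :: "nat \<Rightarrow> real \<Rightarrow> nat \<Rightarrow> 'a \<Rightarrow> real" where
  "exit_step n K j \<omega> = localizer n K j \<omega> * (1 - localizer n K (Suc j) \<omega>)"

definition stopped_sq_incr :: "nat \<Rightarrow> real \<Rightarrow> nat \<Rightarrow> 'a \<Rightarrow> real" where
  "stopped_sq_incr n K j \<omega> = localizer n K (Suc j) \<omega> * (incr n j \<omega>)\<^sup>2"

definition stopped_qv :: "nat \<Rightarrow> real \<Rightarrow> 'a \<Rightarrow> real" where
  "stopped_qv n K \<omega> = (\<Sum>j<n. stopped_sq_incr n K j \<omega>)"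

definition big_incr :: "nat \<Rightarrow> real \<Rightarrow> nat \<Rightarrow> 'a \<Rightarrow> real" where
  "big_incr n \<eta> j \<omega> = (if \<eta> < \<bar>incr n j \<omega>\<bar> then 1 else 0)"

definition some_big_incr :: "nat \<Rightarrow> real \<Rightarrow> 'a \<Rightarrow> real" where
  "some_big_incr n \<eta> \<omega> = (if \<exists>j<n. \<eta> < \<bar>incr n j \<omega>\<bar> then 1 else 0)"

lemma bounded_until_Suc:
  "bounded_until n K (Suc j) \<omega> \<longleftrightarrow> bounded_until n K j \<omega> \<and> \<bar>X (grid n (Suc j)) \<omega>\<bar> \<le> K"
  unfolding bounded_until_def by (auto simp: le_Suc_eq)

\<comment> \<open>small increments use the cubic bound, large ones before the exit are counted by \<open>big_incr\<close>,
  and the exit step is controlled by the position at the exit\<close>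
lemma localized_iexp_rem_le:
  assumes "0 < \<eta>"
  shows "localizer n K j \<omega> * cmod (iexp_rem (u * incr n j \<omega>))
    \<le> \<bar>u\<bar> ^ 3 * \<eta> / 6 * (localizer n K j \<omega> * (incr n j \<omega>)\<^sup>2)
      + u\<^sup>2 * (stopped_sq_incr n K j \<omega> * big_incr n \<eta> j \<omega>)
      + 4 * u\<^sup>2 * (exit_step n K j \<omega> * (X (grid n (Suc j)) \<omega>)\<^sup>2)"
proof -
  let ?D = "incr n j \<omega>" and ?X = "X (grid n (Suc j)) \<omega>"
  have nonneg: "0 \<le> \<bar>u\<bar> ^ 3 * \<eta> / 6 * (localizer n K j \<omega> * ?D\<^sup>2)"
    "0 \<le> u\<^sup>2 * (stopped_sq_incr n K j \<omega> * big_incr n \<eta> j \<omega>)"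
    "0 \<le> 4 * u\<^sup>2 * (exit_step n K j \<omega> * ?X\<^sup>2)"
    using assms by (auto simp: localizer_def stopped_sq_incr_def big_incr_def exit_step_def)
  have rem_sq: "cmod (iexp_rem (u * ?D)) \<le> u\<^sup>2 * ?D\<^sup>2"
    using norm_iexp_rem_le_square[of "u * ?D"] by (simp add: power_mult_distrib)
  consider "\<not> bounded_until n K j \<omega>"
    | "bounded_until n K j \<omega>" "\<bar>?D\<bar> \<le> \<eta>"
    | "bounded_until n K (Suc j) \<omega>" "\<eta> < \<bar>?D\<bar>"
    | "bounded_until n K j \<omega>" "\<not> bounded_until n K (Suc j) \<omega>"
    by (metis bounded_until_Suc linorder_not_le)
  then show ?thesis
  proof cases
    case 1
    then show ?thesis using nonneg by (simp add: localizer_def)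
  next
    case 2
    then show ?thesis using norm_iexp_rem_mult_le[of ?D \<eta> u] nonneg by (simp add: localizer_def)
  next
    case 3
    then have "localizer n K j \<omega> * cmod (iexp_rem (u * ?D)) \<le> u\<^sup>2 * (stopped_sq_incr n K j \<omega> * big_incr n \<eta> j \<omega>)"
      using rem_sq localizer_le_1[of n K j \<omega>]
      by (simp add: stopped_sq_incr_def big_incr_def localizer_def)
    then show ?thesis using nonneg by linarith
  next
    case 4
    then have "\<bar>X (grid n j) \<omega>\<bar> \<le> K" "K < \<bar>?X\<bar>"
      by (auto simp: bounded_until_Suc) (simp add: bounded_until_def)
    then have "\<bar>?D\<bar> \<le> \<bar>2 * ?X\<bar>" unfolding incr_def by linarith
    then have "?D\<^sup>2 \<le> 4 * ?X\<^sup>2" by (simp add: abs_le_square_iff power_mult_distrib)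
    then have "u\<^sup>2 * ?D\<^sup>2 \<le> u\<^sup>2 * (4 * ?X\<^sup>2)" by (simp add: mult_left_mono)
    moreover have "exit_step n K j \<omega> = 1" "localizer n K j \<omega> = 1"
      using 4 by (simp_all add: exit_step_def localizer_def)
    ultimately show ?thesis using rem_sq nonneg by simp
  qed
qed

lemma localized_sq_incr_integrable:
  "j < n \<Longrightarrow> integrable M (\<lambda>\<omega>. localizer n K j \<omega> * (incr n j \<omega>)\<^sup>2)"
  by (intro integrable_bounded_mult[where B=1] incr_integrable_sq localizer_measurable)
     (auto simp: abs_localizer_le_1)

lemma integral_localized_sq_incr:
  assumes "j < n"
  shows "(\<integral>\<omega>. localizer n K j \<omega> * (incr n j \<omega>)\<^sup>2 \<partial>M) = qincr n j * (\<integral>\<omega>. localizer n K j \<omega> \<partial>M)"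
proof -
  have "0 \<le> grid n j" "grid n j \<le> grid n (Suc j)" "grid n (Suc j) \<le> t"
    using grid_nonneg grid_mono[of j "Suc j" n] grid_le[of "Suc j" n] assms by auto
  from integral_bounded_mult_sq_increment[OF this localizer_measurable_F[of j j n K], of 1]
  show ?thesis using assms abs_localizer_le_1 unfolding incr_def qincr_def by auto
qed

lemma integral_localizer_le_1: "j \<le> n \<Longrightarrow> (\<integral>\<omega>. localizer n K j \<omega> \<partial>M) \<le> 1"
proof -
  assume "j \<le> n"
  then have "(\<integral>\<omega>. localizer n K j \<omega> \<partial>M) \<le> (\<integral>\<omega>. 1 \<partial>M)"
    using localizer_integrable localizer_le_1 by (intro integral_mono) auto
  then show ?thesis by (simp add: prob_space)
qed

lemma integral_localized_sq_incr_le: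
  "j < n \<Longrightarrow> (\<integral>\<omega>. localizer n K j \<omega> * (incr n j \<omega>)\<^sup>2 \<partial>M) \<le> qincr n j"
  using integral_localized_sq_incr[of j n K] qincr_nonneg[of j n] integral_localizer_le_1[of j n K]
  by (simp add: mult_left_le)

lemma sum_integral_localized_sq_incr_le:
  "0 < n \<Longrightarrow> (\<Sum>j<n. \<integral>\<omega>. localizer n K j \<omega> * (incr n j \<omega>)\<^sup>2 \<partial>M) \<le> q t"
proof -
  assume "0 < n"
  have "(\<Sum>j<n. \<integral>\<omega>. localizer n K j \<omega> * (incr n j \<omega>)\<^sup>2 \<partial>M) \<le> (\<Sum>j<n. qincr n j)"
    by (intro sum_mono integral_localized_sq_incr_le) simp
  then show ?thesis using sum_qincr[OF \<open>0 < n\<close>] by simp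
qed

lemma exit_step_nonneg: "0 \<le> exit_step n K j \<omega>"
  by (simp add: exit_step_def localizer_def)

lemma abs_exit_step_le_1: "\<bar>exit_step n K j \<omega>\<bar> \<le> 1"
  by (simp add: exit_step_def localizer_def)

lemma sum_exit_step: "(\<Sum>j<m. exit_step n K j \<omega>) = localizer n K 0 \<omega> - localizer n K m \<omega>"
proof -
  have "exit_step n K j \<omega> = localizer n K j \<omega> - localizer n K (Suc j) \<omega>" for j
    unfolding exit_step_def by (auto simp: localizer_def bounded_until_Suc)
  then show ?thesis using sum_lessThan_telescope'[of "\<lambda>j. localizer n K j \<omega>" m] by simp
qed

lemma exit_step_measurable_F: "j < n \<Longrightarrow> exit_step n K j \<in> borel_measurable (F (grid n (Suc j)))"
proof -
  assume "j < n"
  then have [measurable]: "localizer n K j \<in> borel_measurable (F (grid n (Suc j)))"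
    "localizer n K (Suc j) \<in> borel_measurable (F (grid n (Suc j)))"
    using localizer_measurable_F by auto
  show ?thesis unfolding exit_step_def[abs_def] by measurable
qed

lemma exit_step_measurable [measurable]: "j < n \<Longrightarrow> exit_step n K j \<in> borel_measurable M"
  using measurable_F_imp_M[OF grid_nonneg grid_le exit_step_measurable_F] by simp

lemma exit_step_sq_integrable:
  "j < n \<Longrightarrow> 0 \<le> s \<Longrightarrow> s \<le> t \<Longrightarrow> integrable M (\<lambda>\<omega>. exit_step n K j \<omega> * (X s \<omega>)\<^sup>2)"
  by (intro integrable_bounded_mult[where B=1] square_integrable exit_step_measurable)
     (auto simp: abs_exit_step_le_1)

lemma sum_integral_exit_step_sq_le:
  "(\<Sum>j<n. \<integral>\<omega>. exit_step n K j \<omega> * (X (grid n (Suc j)) \<omega>)\<^sup>2 \<partial>M)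
    \<le> (\<integral>\<omega>. (1 - localizer n K n \<omega>) * (X t \<omega>)\<^sup>2 \<partial>M)"
proof -
  have "(\<Sum>j<n. \<integral>\<omega>. exit_step n K j \<omega> * (X (grid n (Suc j)) \<omega>)\<^sup>2 \<partial>M)
      \<le> (\<Sum>j<n. \<integral>\<omega>. exit_step n K j \<omega> * (X t \<omega>)\<^sup>2 \<partial>M)"
  proof (rule sum_mono)
    fix j assume "j \<in> {..<n}"
    then show "(\<integral>\<omega>. exit_step n K j \<omega> * (X (grid n (Suc j)) \<omega>)\<^sup>2 \<partial>M)
        \<le> (\<integral>\<omega>. exit_step n K j \<omega> * (X t \<omega>)\<^sup>2 \<partial>M)"
      using grid_le[of "Suc j" n] exit_step_nonneg abs_exit_step_le_1
      by (intro integral_bounded_mult_sq_mono[OF grid_nonneg _ order_refl exit_step_measurable_F,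
            where B=1]) (auto simp: abs_le_iff)
  qed
  also have "\<dots> = (\<integral>\<omega>. (\<Sum>j<n. exit_step n K j \<omega>) * (X t \<omega>)\<^sup>2 \<partial>M)"
    using exit_step_sq_integrable t_nonneg
    by (subst Bochner_Integration.integral_sum[symmetric]) (auto simp: sum_distrib_right)
  also have "\<dots> \<le> (\<integral>\<omega>. (1 - localizer n K n \<omega>) * (X t \<omega>)\<^sup>2 \<partial>M)"
  proof (rule integral_mono)
    show "integrable M (\<lambda>\<omega>. (\<Sum>j<n. exit_step n K j \<omega>) * (X t \<omega>)\<^sup>2)"
      unfolding sum_distrib_right using exit_step_sq_integrable t_nonneg by auto
    have "(\<lambda>\<omega>. 1 - localizer n K n \<omega>) \<in> borel_measurable M" by measurable
    then show "integrable M (\<lambda>\<omega>. (1 - localizer n K n \<omega>) * (X t \<omega>)\<^sup>2)"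
      using square_integrable t_nonneg
      by (intro integrable_bounded_mult[where B=1]) (auto simp: localizer_def)
    show "(\<Sum>j<n. exit_step n K j \<omega>) * (X t \<omega>)\<^sup>2 \<le> (1 - localizer n K n \<omega>) * (X t \<omega>)\<^sup>2" for \<omega>
      unfolding sum_exit_step using localizer_le_1[of n K 0 \<omega>] by (intro mult_right_mono) auto
  qed
  finally show ?thesis .
qed

lemma stopped_sq_incr_nonneg: "0 \<le> stopped_sq_incr n K j \<omega>"
  by (simp add: stopped_sq_incr_def localizer_def)

lemma stopped_sq_incr_le: "stopped_sq_incr n K j \<omega> \<le> 4 * K\<^sup>2"
proof (cases "bounded_until n K (Suc j) \<omega>")
  case True
  then have "\<bar>X (grid n j) \<omega>\<bar> \<le> K" "\<bar>X (grid n (Suc j)) \<omega>\<bar> \<le> K"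
    by (auto simp: bounded_until_def)
  then have "\<bar>incr n j \<omega>\<bar> \<le> \<bar>2 * K\<bar>" unfolding incr_def by linarith
  then have "(incr n j \<omega>)\<^sup>2 \<le> (2 * K)\<^sup>2" using abs_le_square_iff by blast
  then show ?thesis using True by (simp add: stopped_sq_incr_def localizer_def power_mult_distrib)
qed (simp add: stopped_sq_incr_def localizer_def)

lemma stopped_sq_incr_le_localized:
  "stopped_sq_incr n K j \<omega> \<le> localizer n K j \<omega> * (incr n j \<omega>)\<^sup>2"
  by (auto simp: stopped_sq_incr_def localizer_def bounded_until_Suc)

lemma stopped_sq_incr_measurable_F:
  "i < j \<Longrightarrow> j \<le> n \<Longrightarrow> stopped_sq_incr n K i \<in> borel_measurable (F (grid n j))"
proof -
  assume "i < j" "j \<le> n"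
  then have [measurable]: "localizer n K (Suc i) \<in> borel_measurable (F (grid n j))"
    "X (grid n i) \<in> borel_measurable (F (grid n j))"
    "X (grid n (Suc i)) \<in> borel_measurable (F (grid n j))"
    using localizer_measurable_F X_grid_measurable_F by auto
  show ?thesis unfolding stopped_sq_incr_def[abs_def] incr_def[abs_def] by measurable
qed

lemma stopped_sq_incr_measurable [measurable]: "i < n \<Longrightarrow> stopped_sq_incr n K i \<in> borel_measurable M"
  using measurable_F_imp_M[OF grid_nonneg grid_le stopped_sq_incr_measurable_F[of i "Suc i" n K]] by auto

lemma stopped_sq_incr_integrable: "i < n \<Longrightarrow> integrable M (stopped_sq_incr n K i)"
  by (rule integrable_const_bound[where B="4 * K\<^sup>2"])
     (use stopped_sq_incr_nonneg stopped_sq_incr_le in auto)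

lemma integral_stopped_sq_incr_le: "i < n \<Longrightarrow> (\<integral>\<omega>. stopped_sq_incr n K i \<omega> \<partial>M) \<le> qincr n i"
  using integral_mono[OF stopped_sq_incr_integrable localized_sq_incr_integrable stopped_sq_incr_le_localized]
    integral_localized_sq_incr_le[of i n K]
  by (meson order_trans)

lemma integral_stopped_sq_incr_mult_le:
  assumes "i < j" "j < n"
  shows "(\<integral>\<omega>. stopped_sq_incr n K i \<omega> * (localizer n K j \<omega> * (incr n j \<omega>)\<^sup>2) \<partial>M)
    \<le> qincr n j * (\<integral>\<omega>. stopped_sq_incr n K i \<omega> \<partial>M)"
proof -
  define Y where "Y = (\<lambda>\<omega>. stopped_sq_incr n K i \<omega> * localizer n K j \<omega>)"
  have s: "0 \<le> grid n j" "grid n j \<le> grid n (Suc j)" "grid n (Suc j) \<le> t"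
    using grid_nonneg grid_mono[of j "Suc j" n] grid_le[of "Suc j" n] assms by auto
  have Y_F: "Y \<in> borel_measurable (F (grid n j))"
  proof -
    have [measurable]: "stopped_sq_incr n K i \<in> borel_measurable (F (grid n j))"
      "localizer n K j \<in> borel_measurable (F (grid n j))"
      using stopped_sq_incr_measurable_F[of i j n K] localizer_measurable_F[of j j n K] assms by auto
    show ?thesis unfolding Y_def by measurable
  qed
  have Y_le: "0 \<le> Y \<omega>" "Y \<omega> \<le> stopped_sq_incr n K i \<omega>" for \<omega>
    unfolding Y_def using stopped_sq_incr_nonneg localizer_nonneg localizer_le_1
    by (auto intro: mult_left_le)
  then have Y_bound: "\<bar>Y \<omega>\<bar> \<le> 4 * K\<^sup>2" for \<omega> using stopped_sq_incr_le order_trans by fastforce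
  have "(\<integral>\<omega>. Y \<omega> * (incr n j \<omega>)\<^sup>2 \<partial>M) = qincr n j * (\<integral>\<omega>. Y \<omega> \<partial>M)"
    unfolding incr_def qincr_def using Y_bound by (intro integral_bounded_mult_sq_increment[OF s Y_F])
  moreover have "(\<integral>\<omega>. Y \<omega> \<partial>M) \<le> (\<integral>\<omega>. stopped_sq_incr n K i \<omega> \<partial>M)"
  proof (rule integral_mono)
    show "integrable M Y"
      using measurable_F_imp_M[OF s(1) _ Y_F] s Y_bound
      by (intro integrable_const_bound[where B="4 * K\<^sup>2"]) auto
  qed (use Y_le stopped_sq_incr_integrable assms in auto)
  ultimately show ?thesis
    using qincr_nonneg[OF assms(2)] unfolding Y_def by (simp add: ac_simps mult_left_mono)
qed

lemma stopped_qv_nonneg: "0 \<le> stopped_qv n K \<omega>"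
  unfolding stopped_qv_def by (intro sum_nonneg) (simp add: stopped_sq_incr_nonneg)

lemma stopped_qv_measurable [measurable]: "stopped_qv n K \<in> borel_measurable M"
  unfolding stopped_qv_def[abs_def] by measurable

lemma stopped_qv_sq_integrable: "integrable M (\<lambda>\<omega>. (stopped_qv n K \<omega>)\<^sup>2)"
proof (rule integrable_const_bound[where B="(real n * (4 * K\<^sup>2))\<^sup>2"])
  have "stopped_qv n K \<omega> \<le> (\<Sum>j<n. 4 * K\<^sup>2)" for \<omega>
    unfolding stopped_qv_def by (intro sum_mono stopped_sq_incr_le)
  then have "stopped_qv n K \<omega> \<le> real n * (4 * K\<^sup>2)" for \<omega> by simp
  then show "AE \<omega> in M. norm ((stopped_qv n K \<omega>)\<^sup>2) \<le> (real n * (4 * K\<^sup>2))\<^sup>2"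
    using stopped_qv_nonneg by (auto intro!: power_mono)
qed measurable

lemma stopped_qv_sq_le:
  "(stopped_qv n K \<omega>)\<^sup>2
    \<le> (\<Sum>i<n. stopped_sq_incr n K i \<omega>
        * (4 * K\<^sup>2 + 2 * (\<Sum>j\<in>{i<..<n}. localizer n K j \<omega> * (incr n j \<omega>)\<^sup>2)))"
  unfolding stopped_qv_def power2_sum_lessThan
proof (rule sum_mono)
  fix i assume "i \<in> {..<n}"
  have "(\<Sum>j\<in>{i<..<n}. stopped_sq_incr n K j \<omega>) \<le> (\<Sum>j\<in>{i<..<n}. localizer n K j \<omega> * (incr n j \<omega>)\<^sup>2)"
    by (intro sum_mono stopped_sq_incr_le_localized)
  then show "stopped_sq_incr n K i \<omega> * (stopped_sq_incr n K i \<omega> + 2 * (\<Sum>j\<in>{i<..<n}. stopped_sq_incr n K j \<omega>))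
      \<le> stopped_sq_incr n K i \<omega> * (4 * K\<^sup>2 + 2 * (\<Sum>j\<in>{i<..<n}. localizer n K j \<omega> * (incr n j \<omega>)\<^sup>2))"
    using stopped_sq_incr_le[of n K i \<omega>] stopped_sq_incr_nonneg by (intro mult_left_mono) auto
qed

lemma integral_stopped_sq_incr_mult_later_le:
  assumes "i < n"
  shows "(\<integral>\<omega>. stopped_sq_incr n K i \<omega>
      * (4 * K\<^sup>2 + 2 * (\<Sum>j\<in>{i<..<n}. localizer n K j \<omega> * (incr n j \<omega>)\<^sup>2)) \<partial>M)
    \<le> (4 * K\<^sup>2 + 2 * q t) * qincr n i"
proof -
  let ?a = "\<integral>\<omega>. stopped_sq_incr n K i \<omega> \<partial>M"
  have int_cross: "integrable M (\<lambda>\<omega>. stopped_sq_incr n K i \<omega> * (localizer n K j \<omega> * (incr n j \<omega>)\<^sup>2))"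
    if "j \<in> {i<..<n}" for j
    using that assms stopped_sq_incr_nonneg stopped_sq_incr_le
    by (intro integrable_bounded_mult[where B="4 * K\<^sup>2"] localized_sq_incr_integrable) auto
  have "(\<integral>\<omega>. stopped_sq_incr n K i \<omega>
      * (4 * K\<^sup>2 + 2 * (\<Sum>j\<in>{i<..<n}. localizer n K j \<omega> * (incr n j \<omega>)\<^sup>2)) \<partial>M)
    = 4 * K\<^sup>2 * ?a
      + 2 * (\<Sum>j\<in>{i<..<n}. \<integral>\<omega>. stopped_sq_incr n K i \<omega> * (localizer n K j \<omega> * (incr n j \<omega>)\<^sup>2) \<partial>M)"
  proof -
    have "(\<lambda>\<omega>. stopped_sq_incr n K i \<omega>
        * (4 * K\<^sup>2 + 2 * (\<Sum>j\<in>{i<..<n}. localizer n K j \<omega> * (incr n j \<omega>)\<^sup>2)))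
      = (\<lambda>\<omega>. 4 * K\<^sup>2 * stopped_sq_incr n K i \<omega>
        + 2 * (\<Sum>j\<in>{i<..<n}. stopped_sq_incr n K i \<omega> * (localizer n K j \<omega> * (incr n j \<omega>)\<^sup>2)))"
      by (simp add: fun_eq_iff algebra_simps sum_distrib_left)
    moreover have "integrable M (\<lambda>\<omega>. \<Sum>j\<in>{i<..<n}.
        stopped_sq_incr n K i \<omega> * (localizer n K j \<omega> * (incr n j \<omega>)\<^sup>2))"
      using int_cross by (intro Bochner_Integration.integrable_sum) auto
    ultimately show ?thesis
      using stopped_sq_incr_integrable[OF assms] int_cross by (simp add: Bochner_Integration.integral_sum)
  qed
  also have "\<dots> \<le> 4 * K\<^sup>2 * ?a + 2 * ((\<Sum>j\<in>{i<..<n}. qincr n j) * ?a)"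
    using integral_stopped_sq_incr_mult_le[of i _ n K]
    by (auto simp: sum_distrib_right intro!: sum_mono)
  also have "\<dots> \<le> 4 * K\<^sup>2 * ?a + 2 * (q t * ?a)"
  proof -
    have "(\<Sum>j\<in>{i<..<n}. qincr n j) \<le> (\<Sum>j<n. qincr n j)"
      by (rule sum_mono2) (auto intro: qincr_nonneg)
    then show ?thesis
      using sum_qincr[of n] assms stopped_sq_incr_nonneg
      by (auto intro!: mult_right_mono integral_nonneg)
  qed
  also have "\<dots> = (4 * K\<^sup>2 + 2 * q t) * ?a"
    by (simp add: algebra_simps)
  also have "\<dots> \<le> (4 * K\<^sup>2 + 2 * q t) * qincr n i"
    using integral_stopped_sq_incr_le[OF assms, of K] q_t_nonneg
    by (intro mult_left_mono) auto
  finally show ?thesis .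
qed

\<comment> \<open>after expanding the square, each cross term weights a later squared increment by an
  \<open>F\<close>-measurable factor and is therefore bounded via \<open>integral_bounded_mult_sq_increment\<close>\<close>
lemma integral_stopped_qv_sq_le:
  assumes "0 < n"
  shows "(\<integral>\<omega>. (stopped_qv n K \<omega>)\<^sup>2 \<partial>M) \<le> (4 * K\<^sup>2 + 2 * q t) * q t"
proof -
  define V where "V = (\<lambda>i \<omega>. stopped_sq_incr n K i \<omega>
    * (4 * K\<^sup>2 + 2 * (\<Sum>j\<in>{i<..<n}. localizer n K j \<omega> * (incr n j \<omega>)\<^sup>2)))"
  have int_V: "integrable M (V i)" if "i < n" for i
  proof -
    have "integrable M (\<lambda>\<omega>. 4 * K\<^sup>2 + 2 * (\<Sum>j\<in>{i<..<n}. localizer n K j \<omega> * (incr n j \<omega>)\<^sup>2))"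
      by (intro Bochner_Integration.integrable_add Bochner_Integration.integrable_mult_right
          Bochner_Integration.integrable_sum integrable_const localized_sq_incr_integrable) auto
    then show ?thesis
      unfolding V_def using that stopped_sq_incr_nonneg stopped_sq_incr_le
      by (intro integrable_bounded_mult[where B="4 * K\<^sup>2"]) auto
  qed
  have "(\<integral>\<omega>. (stopped_qv n K \<omega>)\<^sup>2 \<partial>M) \<le> (\<integral>\<omega>. (\<Sum>i<n. V i \<omega>) \<partial>M)"
    using stopped_qv_sq_integrable int_V stopped_qv_sq_le unfolding V_def
    by (intro integral_mono Bochner_Integration.integrable_sum) auto
  also have "\<dots> = (\<Sum>i<n. \<integral>\<omega>. V i \<omega> \<partial>M)"
    using int_V by (intro Bochner_Integration.integral_sum) auto
  also have "\<dots> \<le> (\<Sum>i<n. (4 * K\<^sup>2 + 2 * q t) * qincr n i)"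
    unfolding V_def by (intro sum_mono integral_stopped_sq_incr_mult_later_le) simp
  also have "\<dots> = (4 * K\<^sup>2 + 2 * q t) * q t"
    using sum_qincr[OF assms] by (simp add: sum_distrib_left[symmetric])
  finally show ?thesis .
qed

lemma some_big_incr_measurable [measurable]: "some_big_incr n \<eta> \<in> borel_measurable M"
proof -
  have [measurable]: "j \<in> {..<n} \<Longrightarrow> incr n j \<in> borel_measurable M" for j by auto
  have "(\<lambda>\<omega>. if \<exists>j\<in>{..<n}. \<eta> < \<bar>incr n j \<omega>\<bar> then 1 else 0 :: real) \<in> borel_measurable M"
    by measurable
  then show ?thesis by (simp add: some_big_incr_def[abs_def])
qed

lemma stopped_sq_incr_big_integrable:
  "j < n \<Longrightarrow> integrable M (\<lambda>\<omega>. stopped_sq_incr n K j \<omega> * big_incr n \<eta> j \<omega>)"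
proof (rule integrable_const_bound[where B="4 * K\<^sup>2"])
  show "AE \<omega> in M. norm (stopped_sq_incr n K j \<omega> * big_incr n \<eta> j \<omega>) \<le> 4 * K\<^sup>2"
    using stopped_sq_incr_nonneg stopped_sq_incr_le by (auto simp: big_incr_def)
  assume "j < n"
  then show "(\<lambda>\<omega>. stopped_sq_incr n K j \<omega> * big_incr n \<eta> j \<omega>) \<in> borel_measurable M"
    unfolding big_incr_def by measurable
qed

lemma sum_stopped_sq_incr_big_le:
  assumes "0 < lam"
  shows "(\<Sum>j<n. stopped_sq_incr n K j \<omega> * big_incr n \<eta> j \<omega>)
    \<le> lam * some_big_incr n \<eta> \<omega> + (stopped_qv n K \<omega>)\<^sup>2 / lam"
proof (cases "\<exists>j<n. \<eta> < \<bar>incr n j \<omega>\<bar>")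
  case False
  then show ?thesis using assms by (simp add: big_incr_def some_big_incr_def)
next
  case True
  have "(\<Sum>j<n. stopped_sq_incr n K j \<omega> * big_incr n \<eta> j \<omega>) \<le> stopped_qv n K \<omega>"
    unfolding stopped_qv_def by (intro sum_mono) (auto simp: big_incr_def stopped_sq_incr_nonneg)
  also have "\<dots> \<le> lam + (stopped_qv n K \<omega>)\<^sup>2 / lam"
  proof -
    have "0 \<le> stopped_qv n K \<omega> * lam" using stopped_qv_nonneg[of n K \<omega>] assms by simp
    then have "stopped_qv n K \<omega> * lam \<le> lam\<^sup>2 + (stopped_qv n K \<omega>)\<^sup>2"
      using sum_squares_bound[of "stopped_qv n K \<omega>" lam] by linarith
    then show ?thesis using assms by (simp add: field_simps power2_eq_square)
  qed
  finally show ?thesis using True by (simp add: some_big_incr_def)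
qed

lemma sum_integral_stopped_sq_incr_big_le:
  assumes "0 < n" "0 < lam"
  shows "(\<Sum>j<n. \<integral>\<omega>. stopped_sq_incr n K j \<omega> * big_incr n \<eta> j \<omega> \<partial>M)
    \<le> lam * (\<integral>\<omega>. some_big_incr n \<eta> \<omega> \<partial>M) + (4 * K\<^sup>2 + 2 * q t) * q t / lam"
proof -
  note int_big = stopped_sq_incr_big_integrable
  have int_some: "integrable M (some_big_incr n \<eta>)"
    by (rule integrable_const_bound[where B=1]) (auto simp: some_big_incr_def)
  have "(\<Sum>j<n. \<integral>\<omega>. stopped_sq_incr n K j \<omega> * big_incr n \<eta> j \<omega> \<partial>M)
      = (\<integral>\<omega>. (\<Sum>j<n. stopped_sq_incr n K j \<omega> * big_incr n \<eta> j \<omega>) \<partial>M)"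
    using int_big by (intro Bochner_Integration.integral_sum[symmetric]) auto
  also have "\<dots> \<le> (\<integral>\<omega>. lam * some_big_incr n \<eta> \<omega> + (stopped_qv n K \<omega>)\<^sup>2 / lam \<partial>M)"
    using int_big int_some stopped_qv_sq_integrable sum_stopped_sq_incr_big_le[OF assms(2)]
    by (intro integral_mono Bochner_Integration.integrable_sum) auto
  also have "\<dots> = lam * (\<integral>\<omega>. some_big_incr n \<eta> \<omega> \<partial>M) + (\<integral>\<omega>. (stopped_qv n K \<omega>)\<^sup>2 \<partial>M) / lam"
    using int_some stopped_qv_sq_integrable by simp
  also have "\<dots> \<le> lam * (\<integral>\<omega>. some_big_incr n \<eta> \<omega> \<partial>M) + (4 * K\<^sup>2 + 2 * q t) * q t / lam"
    using integral_stopped_qv_sq_le[OF assms(1), of K] assms(2) by (simp add: divide_right_mono)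
  finally show ?thesis .
qed

lemma sum_integral_localized_iexp_rem_le:
  assumes "0 < n" "0 < \<eta>" "0 < lam"
  shows "(\<Sum>j<n. \<integral>\<omega>. localizer n K j \<omega> * cmod (iexp_rem (u * incr n j \<omega>)) \<partial>M)
    \<le> \<bar>u\<bar> ^ 3 * \<eta> / 6 * q t
      + u\<^sup>2 * (lam * (\<integral>\<omega>. some_big_incr n \<eta> \<omega> \<partial>M) + (4 * K\<^sup>2 + 2 * q t) * q t / lam)
      + 4 * u\<^sup>2 * (\<integral>\<omega>. (1 - localizer n K n \<omega>) * (X t \<omega>)\<^sup>2 \<partial>M)"
proof -
  let ?c = "\<bar>u\<bar> ^ 3 * \<eta> / 6"
  let ?A = "\<lambda>j. \<integral>\<omega>. localizer n K j \<omega> * (incr n j \<omega>)\<^sup>2 \<partial>M"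
    and ?B = "\<lambda>j. \<integral>\<omega>. stopped_sq_incr n K j \<omega> * big_incr n \<eta> j \<omega> \<partial>M"
    and ?C = "\<lambda>j. \<integral>\<omega>. exit_step n K j \<omega> * (X (grid n (Suc j)) \<omega>)\<^sup>2 \<partial>M"
  have step: "(\<integral>\<omega>. localizer n K j \<omega> * cmod (iexp_rem (u * incr n j \<omega>)) \<partial>M)
      \<le> ?c * ?A j + u\<^sup>2 * ?B j + 4 * u\<^sup>2 * ?C j" if "j < n" for j
  proof -
    have int_rem: "integrable M (\<lambda>\<omega>. localizer n K j \<omega> * cmod (iexp_rem (u * incr n j \<omega>)))"
      using that iexp_rem_incr_integrable
      by (intro integrable_bounded_mult[where B=1]) (auto simp: abs_localizer_le_1)
    note ints = localized_sq_incr_integrable[OF that] stopped_sq_incr_big_integrable[OF that]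
      exit_step_sq_integrable[OF that grid_nonneg grid_le[of "Suc j" n]]
    have "(\<integral>\<omega>. localizer n K j \<omega> * cmod (iexp_rem (u * incr n j \<omega>)) \<partial>M)
      \<le> (\<integral>\<omega>. ?c * (localizer n K j \<omega> * (incr n j \<omega>)\<^sup>2)
          + u\<^sup>2 * (stopped_sq_incr n K j \<omega> * big_incr n \<eta> j \<omega>)
          + 4 * u\<^sup>2 * (exit_step n K j \<omega> * (X (grid n (Suc j)) \<omega>)\<^sup>2) \<partial>M)"
      using int_rem ints that localized_iexp_rem_le[OF assms(2)] by (intro integral_mono) auto
    also have "\<dots> = ?c * ?A j + u\<^sup>2 * ?B j + 4 * u\<^sup>2 * ?C j"
      using ints that by simp
    finally show ?thesis .
  qed
  have "(\<Sum>j<n. \<integral>\<omega>. localizer n K j \<omega> * cmod (iexp_rem (u * incr n j \<omega>)) \<partial>M)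
      \<le> (\<Sum>j<n. ?c * ?A j + u\<^sup>2 * ?B j + 4 * u\<^sup>2 * ?C j)"
    using step by (intro sum_mono) auto
  also have "\<dots> = ?c * (\<Sum>j<n. ?A j) + u\<^sup>2 * (\<Sum>j<n. ?B j) + 4 * u\<^sup>2 * (\<Sum>j<n. ?C j)"
    by (simp add: sum.distrib sum_distrib_left)
  also have "\<dots> \<le> ?c * q t
      + u\<^sup>2 * (lam * (\<integral>\<omega>. some_big_incr n \<eta> \<omega> \<partial>M) + (4 * K\<^sup>2 + 2 * q t) * q t / lam)
      + 4 * u\<^sup>2 * (\<integral>\<omega>. (1 - localizer n K n \<omega>) * (X t \<omega>)\<^sup>2 \<partial>M)"
    using sum_integral_localized_sq_incr_le[OF assms(1), of K]
      sum_integral_stopped_sq_incr_big_le[OF assms(1,3), of K \<eta>] sum_integral_exit_step_sq_le[of n K]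
      assms(2)
    by (intro add_mono mult_left_mono) auto
  finally show ?thesis .
qed

lemma norm_cintegral_expmart_sub_1_le:
  fixes u K \<eta> lam :: real and n :: nat
  assumes n: "0 < n" and eta: "0 < \<eta>" and lam: "0 < lam"
  defines "B \<equiv> exp (u\<^sup>2 * q t / 2)"
  shows "cmod ((CLINT \<omega>|M. expmart u n n \<omega>) - 1)
    \<le> 2 * B * (\<integral>\<omega>. 1 - localizer n K n \<omega> \<partial>M) + B\<^sup>2 * (\<Sum>j<n. (u\<^sup>2 * qincr n j / 2)\<^sup>2)
      + B\<^sup>2 * ((\<bar>u\<bar>^3 * \<eta> / 6) * q t
        + u\<^sup>2 * (lam * (\<integral>\<omega>. some_big_incr n \<eta> \<omega> \<partial>M) + (4 * K\<^sup>2 + 2 * q t) * q t / lam)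
        + 4 * u\<^sup>2 * (\<integral>\<omega>. (1 - localizer n K n \<omega>) * (X t \<omega>)\<^sup>2 \<partial>M))"
proof -
  let ?s = "\<lambda>j. CLINT \<omega>|M. complex_of_real (localizer n K j \<omega>) * (expmart u n (Suc j) \<omega> - expmart u n j \<omega>)"
  have "cmod ((CLINT \<omega>|M. expmart u n n \<omega>) - 1)
      \<le> cmod ((CLINT \<omega>|M. expmart u n n \<omega>) - 1 - (\<Sum>j<n. ?s j)) + cmod (\<Sum>j<n. ?s j)"
    by (rule order_trans[OF _ norm_triangle_ineq]) simp
  also have "\<dots> \<le> 2 * B * (\<integral>\<omega>. 1 - localizer n K n \<omega> \<partial>M) + (\<Sum>j<n. cmod (?s j))"
    using norm_cintegral_expmart_sub_localized_le[of u n K] norm_sum[of ?s "{..<n}"]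
    unfolding B_def by linarith
  also have "(\<Sum>j<n. cmod (?s j)) \<le> (\<Sum>j<n. B\<^sup>2 * (u\<^sup>2 * qincr n j / 2)\<^sup>2
      + B\<^sup>2 * (\<integral>\<omega>. localizer n K j \<omega> * cmod (iexp_rem (u * incr n j \<omega>)) \<partial>M))"
    unfolding B_def using norm_cintegral_localized_step_le by (intro sum_mono) auto
  also have "\<dots> = B\<^sup>2 * (\<Sum>j<n. (u\<^sup>2 * qincr n j / 2)\<^sup>2)
      + B\<^sup>2 * (\<Sum>j<n. \<integral>\<omega>. localizer n K j \<omega> * cmod (iexp_rem (u * incr n j \<omega>)) \<partial>M)"
    by (simp add: sum.distrib sum_distrib_left)
  also have "B\<^sup>2 * (\<Sum>j<n. \<integral>\<omega>. localizer n K j \<omega> * cmod (iexp_rem (u * incr n j \<omega>)) \<partial>M)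
    \<le> B\<^sup>2 * ((\<bar>u\<bar>^3 * \<eta> / 6) * q t
        + u\<^sup>2 * (lam * (\<integral>\<omega>. some_big_incr n \<eta> \<omega> \<partial>M) + (4 * K\<^sup>2 + 2 * q t) * q t / lam)
        + 4 * u\<^sup>2 * (\<integral>\<omega>. (1 - localizer n K n \<omega>) * (X t \<omega>)\<^sup>2 \<partial>M))"
    using sum_integral_localized_iexp_rem_le[OF n eta lam, of K u] by (intro mult_left_mono) auto
  finally show ?thesis by simp
qed

section \<open>Levy's characterisation at time \<open>t\<close>\<close>

\<comment> \<open>countably many times containing every grid point, so that \<open>escape K\<close> is measurable\<close>
definition rational_times :: "real set" where
  "rational_times = (\<lambda>r. t * real_of_rat r) ` {r. 0 \<le> r \<and> r \<le> 1}"

definition escape :: "real \<Rightarrow> 'a set" where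
  "escape K = {\<omega> \<in> space M. \<exists>s\<in>rational_times. K < \<bar>X s \<omega>\<bar>}"

lemma countable_rational_times: "countable rational_times"
  unfolding rational_times_def by (rule countable_image) (rule countable_subset[OF subset_UNIV countableI_type])

lemma rational_times_subset: "s \<in> rational_times \<Longrightarrow> 0 \<le> s \<and> s \<le> t"
  unfolding rational_times_def using t_nonneg by (auto intro: mult_left_le)

lemma grid_in_rational_times: "j \<le> n \<Longrightarrow> grid n j \<in> rational_times"
proof -
  assume "j \<le> n"
  then have "0 \<le> (of_nat j / of_nat n :: rat) \<and> (of_nat j / of_nat n :: rat) \<le> 1"
    by (cases "n = 0") auto
  moreover have "grid n j = t * real_of_rat (of_nat j / of_nat n)" by (simp add: grid_def of_rat_divide)
  ultimately show ?thesis unfolding rational_times_def by blast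
qed

lemma escape_sets [measurable]: "escape K \<in> sets M"
  unfolding escape_def
proof (rule sets.sets_Collect_countable_Ex'[OF _ countable_rational_times])
  fix s assume "s \<in> rational_times"
  then have [measurable]: "X s \<in> borel_measurable M" using X_measurable rational_times_subset by blast
  show "{\<omega> \<in> space M. K < \<bar>X s \<omega>\<bar>} \<in> sets M" by measurable
qed

lemma one_minus_localizer_le_escape:
  assumes "\<omega> \<in> space M"
  shows "1 - localizer n K n \<omega> \<le> indicator (escape K) \<omega>"
proof (cases "bounded_until n K n \<omega>")
  case False
  then obtain i where "i \<le> n" "K < \<bar>X (grid n i) \<omega>\<bar>" by (auto simp: bounded_until_def not_le)
  then have "\<omega> \<in> escape K" using assms grid_in_rational_times unfolding escape_def by blast
  then show ?thesis by (simp add: localizer_nonneg)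
qed (simp add: localizer_def)

lemma integral_one_minus_localizer_le_escape:
  "(\<integral>\<omega>. 1 - localizer n K n \<omega> \<partial>M) \<le> measure M (escape K)"
proof -
  have "(\<integral>\<omega>. 1 - localizer n K n \<omega> \<partial>M) \<le> (\<integral>\<omega>. indicator (escape K) \<omega> \<partial>M)"
    using localizer_integrable[of n n K] one_minus_localizer_le_escape
    by (intro integral_mono integrable_real_indicator) (auto simp: less_top[symmetric])
  then show ?thesis by simp
qed

lemma integral_one_minus_localizer_sq_le_escape:
  "(\<integral>\<omega>. (1 - localizer n K n \<omega>) * (X t \<omega>)\<^sup>2 \<partial>M)
    \<le> (\<integral>\<omega>. indicator (escape K) \<omega> * (X t \<omega>)\<^sup>2 \<partial>M)"
proof (rule integral_mono)
  have int_Xt: "integrable M (\<lambda>\<omega>. (X t \<omega>)\<^sup>2)" using square_integrable t_nonneg by simp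
  have "(\<lambda>\<omega>. 1 - localizer n K n \<omega>) \<in> borel_measurable M" by measurable
  then show "integrable M (\<lambda>\<omega>. (1 - localizer n K n \<omega>) * (X t \<omega>)\<^sup>2)"
    by (rule integrable_bounded_mult[OF int_Xt, where B=1]) (auto simp: localizer_def)
  show "integrable M (\<lambda>\<omega>. indicator (escape K) \<omega> * (X t \<omega>)\<^sup>2)"
    by (rule integrable_bounded_mult[OF int_Xt, where B=1]) auto
  show "(1 - localizer n K n \<omega>) * (X t \<omega>)\<^sup>2 \<le> indicator (escape K) \<omega> * (X t \<omega>)\<^sup>2"
    if "\<omega> \<in> space M" for \<omega>
    using one_minus_localizer_le_escape[OF that] by (intro mult_right_mono) auto
qed

lemma escape_AE_tendsto_0: "AE \<omega> in M. (\<lambda>K. indicator (escape (real K)) \<omega> :: real) \<longlonglongrightarrow> 0"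
  using continuous_paths
proof eventually_elim
  case (elim \<omega>)
  have "bounded ((\<lambda>s. X s \<omega>) ` {0..t})"
    by (rule compact_imp_bounded[OF compact_continuous_image[OF elim compact_Icc]])
  then obtain C where "\<forall>x\<in>(\<lambda>s. X s \<omega>) ` {0..t}. \<bar>x\<bar> \<le> C" unfolding bounded_real by blast
  then have C: "\<And>s. s \<in> {0..t} \<Longrightarrow> \<bar>X s \<omega>\<bar> \<le> C" by blast
  have "\<omega> \<notin> escape (real K)" if "C < real K" for K
  proof
    assume "\<omega> \<in> escape (real K)"
    then obtain s where "s \<in> rational_times" "real K < \<bar>X s \<omega>\<bar>" by (auto simp: escape_def)
    then show False using C[of s] rational_times_subset[of s] that by auto
  qed
  moreover have "eventually (\<lambda>K. C < real K) sequentially" by real_asymp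
  ultimately have "eventually (\<lambda>K. indicator (escape (real K)) \<omega> = (0::real)) sequentially"
    by (auto elim!: eventually_mono)
  then show ?case by (rule tendsto_eventually)
qed

lemma measure_escape_tendsto_0: "(\<lambda>K. measure M (escape (real K))) \<longlonglongrightarrow> 0"
proof -
  have "(\<lambda>K. \<integral>\<omega>. indicator (escape (real K)) \<omega> \<partial>M) \<longlonglongrightarrow> (\<integral>\<omega>. 0 \<partial>M :: real)"
  proof (rule integral_dominated_convergence[where w="\<lambda>_. 1"])
    show "AE \<omega> in M. (\<lambda>K. indicator (escape (real K)) \<omega>) \<longlonglongrightarrow> (0::real)"
      by (rule escape_AE_tendsto_0)
    show "AE \<omega> in M. norm (indicator (escape (real K)) \<omega> :: real) \<le> 1" for K
      by (auto simp: indicator_def)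
  qed simp_all
  then show ?thesis by simp
qed

lemma integral_escape_sq_tendsto_0:
  "(\<lambda>K. \<integral>\<omega>. indicator (escape (real K)) \<omega> * (X t \<omega>)\<^sup>2 \<partial>M) \<longlonglongrightarrow> 0"
proof -
  have [measurable]: "X t \<in> borel_measurable M" using X_measurable t_nonneg by simp
  have "(\<lambda>K. \<integral>\<omega>. indicator (escape (real K)) \<omega> * (X t \<omega>)\<^sup>2 \<partial>M) \<longlonglongrightarrow> (\<integral>\<omega>. 0 \<partial>M :: real)"
  proof (rule integral_dominated_convergence[where w="\<lambda>\<omega>. (X t \<omega>)\<^sup>2"])
    show "integrable M (\<lambda>\<omega>. (X t \<omega>)\<^sup>2)" using square_integrable t_nonneg by simp
    show "AE \<omega> in M. (\<lambda>K. indicator (escape (real K)) \<omega> * (X t \<omega>)\<^sup>2) \<longlonglongrightarrow> 0"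
      using escape_AE_tendsto_0 by eventually_elim (rule tendsto_mult_left_zero)
    show "AE \<omega> in M. norm (indicator (escape (real K)) \<omega> * (X t \<omega>)\<^sup>2) \<le> (X t \<omega>)\<^sup>2" for K
      by (auto simp: indicator_def)
  qed simp_all
  then show ?thesis by simp
qed

lemma eventually_grid_increments_small:
  fixes f :: "real \<Rightarrow> real"
  assumes "continuous_on {0..t} f" "0 < e"
  shows "eventually (\<lambda>n. \<forall>j<n. \<bar>f (grid n (Suc j)) - f (grid n j)\<bar> < e) sequentially"
proof -
  obtain d where d: "0 < d"
    "\<And>s s'. s \<in> {0..t} \<Longrightarrow> s' \<in> {0..t} \<Longrightarrow> dist s' s < d \<Longrightarrow> dist (f s') (f s) < e"
    using compact_uniformly_continuous[OF assms(1) compact_Icc] assms(2)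
    unfolding uniformly_continuous_on_def by metis
  have "eventually (\<lambda>n. t / real n < d) sequentially"
    using d(1) by real_asymp
  then show ?thesis
  proof eventually_elim
    case (elim n)
    show ?case
    proof (intro allI impI)
      fix j assume "j < n"
      then have "grid n (Suc j) \<in> {0..t}" "grid n j \<in> {0..t}"
        using grid_nonneg grid_le[of "Suc j" n] grid_le[of j n] by auto
      moreover have "dist (grid n (Suc j)) (grid n j) < d"
        using elim grid_step[of n j] grid_mono[of j "Suc j" n] by (simp add: dist_real_def)
      ultimately show "\<bar>f (grid n (Suc j)) - f (grid n j)\<bar> < e"
        using d(2) by (simp add: dist_real_def)
    qed
  qed
qed

lemma some_big_incr_AE_tendsto_0:
  assumes "0 < \<eta>"
  shows "AE \<omega> in M. (\<lambda>n. some_big_incr n \<eta> \<omega>) \<longlonglongrightarrow> 0"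
  using continuous_paths
proof eventually_elim
  case (elim \<omega>)
  have "eventually (\<lambda>n. some_big_incr n \<eta> \<omega> = 0) sequentially"
    using eventually_grid_increments_small[OF elim assms]
    by eventually_elim (auto simp: some_big_incr_def incr_def)
  then show ?case by (rule tendsto_eventually)
qed

lemma integral_some_big_incr_tendsto_0:
  assumes "0 < \<eta>"
  shows "(\<lambda>n. \<integral>\<omega>. some_big_incr n \<eta> \<omega> \<partial>M) \<longlonglongrightarrow> 0"
proof -
  have "(\<lambda>n. \<integral>\<omega>. some_big_incr n \<eta> \<omega> \<partial>M) \<longlonglongrightarrow> (\<integral>\<omega>. 0 \<partial>M)"
    by (rule integral_dominated_convergence[where w="\<lambda>_. 1"])
       (use some_big_incr_AE_tendsto_0[OF assms] in \<open>auto simp: some_big_incr_def\<close>)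
  then show ?thesis by simp
qed

lemma sum_qincr_sq_tendsto_0: "(\<lambda>n. \<Sum>j<n. (qincr n j)\<^sup>2) \<longlonglongrightarrow> 0"
proof (rule order_tendstoI)
  fix e :: real assume "0 < e"
  then have "0 < e / (1 + q t)" using q_t_nonneg by simp
  from eventually_grid_increments_small[OF continuous_q this]
  have "eventually (\<lambda>n. \<forall>j<n. qincr n j < e / (1 + q t)) sequentially"
    by eventually_elim (auto simp: qincr_def abs_less_iff)
  moreover have "eventually (\<lambda>n. 0 < n) sequentially" by (rule eventually_gt_at_top)
  ultimately show "eventually (\<lambda>n. (\<Sum>j<n. (qincr n j)\<^sup>2) < e) sequentially"
  proof eventually_elim
    case (elim n)
    \<comment> \<open>\<open>\<Sum> (qincr n j)\<^sup>2 \<le> max (qincr n j) * \<Sum> qincr n j\<close>, and the last sum is \<open>q t\<close>\<close>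
    have "(\<Sum>j<n. (qincr n j)\<^sup>2) \<le> (\<Sum>j<n. e / (1 + q t) * qincr n j)"
    proof (rule sum_mono)
      fix j assume "j \<in> {..<n}"
      then show "(qincr n j)\<^sup>2 \<le> e / (1 + q t) * qincr n j"
        using elim(1) qincr_nonneg[of j n] unfolding power2_eq_square by (intro mult_right_mono) auto
    qed
    also have "\<dots> = e * (q t / (1 + q t))"
      using sum_qincr[OF elim(2)] by (simp add: sum_divide_distrib[symmetric] sum_distrib_left[symmetric])
    also have "\<dots> < e" using \<open>0 < e\<close> q_t_nonneg by (simp add: field_simps)
    finally show ?case .
  qed
next
  fix e :: real assume "e < 0"
  moreover have "0 \<le> (\<Sum>j<n. (qincr n j)\<^sup>2)" for n by (intro sum_nonneg) simp
  ultimately show "eventually (\<lambda>n. e < (\<Sum>j<n. (qincr n j)\<^sup>2)) sequentially"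
    by (intro always_eventually allI) (rule less_le_trans)
qed

lemma norm_char_mult_sub_1_le:
  fixes u K \<eta> lam :: real and n :: nat
  assumes n: "0 < n" and eta: "0 < \<eta>" and lam: "0 < lam"
  defines "B \<equiv> exp (u\<^sup>2 * q t / 2)"
  shows "cmod ((CLINT \<omega>|M. iexp (u * X t \<omega>)) * complex_of_real B - 1)
    \<le> 2 * B * measure M (escape K) + 4 * B\<^sup>2 * u\<^sup>2 * (\<integral>\<omega>. indicator (escape K) \<omega> * (X t \<omega>)\<^sup>2 \<partial>M)
      + B\<^sup>2 * \<bar>u\<bar> ^ 3 * q t / 6 * \<eta> + B\<^sup>2 * u\<^sup>2 * (4 * K\<^sup>2 + 2 * q t) * q t / lam
      + (B\<^sup>2 * u ^ 4 / 4 * (\<Sum>j<n. (qincr n j)\<^sup>2)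
        + B\<^sup>2 * u\<^sup>2 * lam * (\<integral>\<omega>. some_big_incr n \<eta> \<omega> \<partial>M))"
    (is "_ \<le> ?rhs")
proof -
  have escape: "2 * B * (\<integral>\<omega>. 1 - localizer n K n \<omega> \<partial>M) \<le> 2 * B * measure M (escape K)"
    using integral_one_minus_localizer_le_escape unfolding B_def by simp
  have escape_sq: "B\<^sup>2 * (4 * u\<^sup>2 * (\<integral>\<omega>. (1 - localizer n K n \<omega>) * (X t \<omega>)\<^sup>2 \<partial>M))
      \<le> 4 * B\<^sup>2 * u\<^sup>2 * (\<integral>\<omega>. indicator (escape K) \<omega> * (X t \<omega>)\<^sup>2 \<partial>M)"
    using integral_one_minus_localizer_sq_le_escape[of n K] by (simp add: mult_left_mono)
  have sum_eq: "(\<Sum>j<n. (u\<^sup>2 * qincr n j / 2)\<^sup>2) = u ^ 4 / 4 * (\<Sum>j<n. (qincr n j)\<^sup>2)"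
    by (simp add: sum_distrib_left power2_eq_square power4_eq_xxxx field_simps)
  have "cmod ((CLINT \<omega>|M. iexp (u * X t \<omega>)) * complex_of_real B - 1)
      = cmod ((CLINT \<omega>|M. expmart u n n \<omega>) - 1)"
    using cintegral_expmart_last[OF n, of u] unfolding B_def by simp
  also have "\<dots> \<le> 2 * B * (\<integral>\<omega>. 1 - localizer n K n \<omega> \<partial>M) + B\<^sup>2 * (\<Sum>j<n. (u\<^sup>2 * qincr n j / 2)\<^sup>2)
      + B\<^sup>2 * ((\<bar>u\<bar>^3 * \<eta> / 6) * q t
        + u\<^sup>2 * (lam * (\<integral>\<omega>. some_big_incr n \<eta> \<omega> \<partial>M) + (4 * K\<^sup>2 + 2 * q t) * q t / lam)
        + 4 * u\<^sup>2 * (\<integral>\<omega>. (1 - localizer n K n \<omega>) * (X t \<omega>)\<^sup>2 \<partial>M))"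
    using norm_cintegral_expmart_sub_1_le[OF n eta lam, of u K] unfolding B_def .
  also have "\<dots> = 2 * B * (\<integral>\<omega>. 1 - localizer n K n \<omega> \<partial>M)
      + B\<^sup>2 * (4 * u\<^sup>2 * (\<integral>\<omega>. (1 - localizer n K n \<omega>) * (X t \<omega>)\<^sup>2 \<partial>M))
      + B\<^sup>2 * \<bar>u\<bar> ^ 3 * q t / 6 * \<eta> + B\<^sup>2 * u\<^sup>2 * (4 * K\<^sup>2 + 2 * q t) * q t / lam
      + (B\<^sup>2 * u ^ 4 / 4 * (\<Sum>j<n. (qincr n j)\<^sup>2)
        + B\<^sup>2 * u\<^sup>2 * lam * (\<integral>\<omega>. some_big_incr n \<eta> \<omega> \<partial>M))"
    unfolding sum_eq by (simp add: algebra_simps)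
  also have "\<dots> \<le> ?rhs"
    unfolding B_def using escape escape_sq by (intro add_mono order_refl) (simp_all add: B_def)
  finally show ?thesis .
qed

lemma norm_char_mult_sub_1_le_escape:
  fixes u K :: real
  defines "B \<equiv> exp (u\<^sup>2 * q t / 2)"
  shows "cmod ((CLINT \<omega>|M. iexp (u * X t \<omega>)) * complex_of_real B - 1)
    \<le> 2 * B * measure M (escape K) + 4 * B\<^sup>2 * u\<^sup>2 * (\<integral>\<omega>. indicator (escape K) \<omega> * (X t \<omega>)\<^sup>2 \<partial>M)"
    (is "?lhs \<le> ?E")
proof -
  define c1 where "c1 = B\<^sup>2 * \<bar>u\<bar> ^ 3 * q t / 6"
  define c2 where "c2 = B\<^sup>2 * u\<^sup>2 * (4 * K\<^sup>2 + 2 * q t) * q t"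
  \<comment> \<open>first let the mesh go to zero, then \<open>\<eta> \<rightarrow> 0\<close> and \<open>lam \<rightarrow> \<infinity>\<close>\<close>
  have mesh_limit: "?lhs \<le> ?E + (c1 * \<eta> + c2 / lam)" if "0 < \<eta>" "0 < lam" for \<eta> lam
  proof (rule tendsto_le[OF trivial_limit_sequentially])
    have "(\<lambda>n. B\<^sup>2 * u ^ 4 / 4 * (\<Sum>j<n. (qincr n j)\<^sup>2)
        + B\<^sup>2 * u\<^sup>2 * lam * (\<integral>\<omega>. some_big_incr n \<eta> \<omega> \<partial>M)) \<longlonglongrightarrow> 0 + 0"
      by (intro tendsto_add tendsto_mult_right_zero sum_qincr_sq_tendsto_0
          integral_some_big_incr_tendsto_0 that)
    then show "(\<lambda>n. ?E + (c1 * \<eta> + c2 / lam) + (B\<^sup>2 * u ^ 4 / 4 * (\<Sum>j<n. (qincr n j)\<^sup>2)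
        + B\<^sup>2 * u\<^sup>2 * lam * (\<integral>\<omega>. some_big_incr n \<eta> \<omega> \<partial>M))) \<longlonglongrightarrow> ?E + (c1 * \<eta> + c2 / lam)"
      using tendsto_add[OF tendsto_const] by fastforce
    show "eventually (\<lambda>n. ?lhs \<le> ?E + (c1 * \<eta> + c2 / lam) + (B\<^sup>2 * u ^ 4 / 4 * (\<Sum>j<n. (qincr n j)\<^sup>2)
        + B\<^sup>2 * u\<^sup>2 * lam * (\<integral>\<omega>. some_big_incr n \<eta> \<omega> \<partial>M))) sequentially"
      using eventually_gt_at_top[of 0]
      by eventually_elim
         (use norm_char_mult_sub_1_le that in \<open>simp add: B_def c1_def c2_def add.assoc\<close>)
  qed simp
  show ?thesis
  proof (rule tendsto_le[OF trivial_limit_sequentially])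
    have "(\<lambda>m. c1 * (1 / real (Suc m)) + c2 / real (Suc m)) \<longlonglongrightarrow> 0"
      by real_asymp
    then show "(\<lambda>m. ?E + (c1 * (1 / real (Suc m)) + c2 / real (Suc m))) \<longlonglongrightarrow> ?E"
      using tendsto_add[OF tendsto_const] by fastforce
    show "eventually (\<lambda>m. ?lhs \<le> ?E + (c1 * (1 / real (Suc m)) + c2 / real (Suc m))) sequentially"
      by (intro always_eventually allI mesh_limit) auto
  qed simp
qed

theorem char_X: "(CLINT \<omega>|M. iexp (u * X t \<omega>)) = complex_of_real (exp (- (u\<^sup>2 * q t) / 2))"
proof -
  define B where "B = exp (u\<^sup>2 * q t / 2)"
  have "cmod ((CLINT \<omega>|M. iexp (u * X t \<omega>)) * complex_of_real B - 1) \<le> 0"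
  proof (rule tendsto_le[OF trivial_limit_sequentially])
    show "(\<lambda>K. 2 * B * measure M (escape (real K))
        + 4 * B\<^sup>2 * u\<^sup>2 * (\<integral>\<omega>. indicator (escape (real K)) \<omega> * (X t \<omega>)\<^sup>2 \<partial>M)) \<longlonglongrightarrow> 0"
      using tendsto_add[OF tendsto_mult_right_zero[OF measure_escape_tendsto_0]
          tendsto_mult_right_zero[OF integral_escape_sq_tendsto_0]]
      by simp
  qed (use norm_char_mult_sub_1_le_escape[of u] in \<open>auto simp: B_def\<close>)
  then have "(CLINT \<omega>|M. iexp (u * X t \<omega>)) * complex_of_real B = 1" by simp
  then show ?thesis unfolding B_def by (simp add: field_simps exp_minus exp_of_real[symmetric])
qed

section \<open>The operator \<open>D\<^sub>t\<close>\<close>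

lemma distr_X_normalized_std_normal:
  assumes "0 < q t"
  shows "distr M borel (\<lambda>\<omega>. X t \<omega> / sqrt (q t)) = std_normal_distribution"
proof (rule Levy_uniqueness)
  have [measurable]: "X t \<in> borel_measurable M" using X_measurable t_nonneg by simp
  show "real_distribution (distr M borel (\<lambda>\<omega>. X t \<omega> / sqrt (q t)))"
    by (rule real_distribution_distr) simp
  show "real_distribution std_normal_distribution" by (rule real_dist_normal_dist)
  have "char (distr M borel (\<lambda>\<omega>. X t \<omega> / sqrt (q t))) v = char std_normal_distribution v" for v
  proof -
    have "char (distr M borel (\<lambda>\<omega>. X t \<omega> / sqrt (q t))) v
        = (CLINT \<omega>|M. iexp (v * (X t \<omega> / sqrt (q t))))"
      unfolding char_def by (subst integral_distr) auto
    also have "\<dots> = (CLINT \<omega>|M. iexp ((v / sqrt (q t)) * X t \<omega>))"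
      by (simp add: field_simps)
    also have "\<dots> = complex_of_real (exp (- ((v / sqrt (q t))\<^sup>2 * q t) / 2))"
      by (rule char_X)
    also have "\<dots> = complex_of_real (exp (- (v\<^sup>2) / 2))"
      using assms by (simp add: power_divide)
    finally show ?thesis by (simp add: char_std_normal_distribution)
  qed
  then show "char (distr M borel (\<lambda>\<omega>. X t \<omega> / sqrt (q t))) = char std_normal_distribution" ..
qed

lemma AE_X_notin_countable:
  assumes "0 < q t" and "countable A"
  shows "AE \<omega> in M. X t \<omega> \<notin> A"
proof -
  have [measurable]: "X t \<in> borel_measurable M" using X_measurable t_nonneg by simp
  define A' where "A' = (\<lambda>x. x / sqrt (q t)) ` A"
  have "A' \<in> null_sets lborel"
    unfolding A'_def using assms(2) by (intro countable_imp_null_set_lborel) simp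
  then have A': "A' \<in> sets borel" "emeasure std_normal_distribution A' = 0"
    by (auto simp: null_sets_def emeasure_density nn_integral_null_set)
  have "emeasure M ((\<lambda>\<omega>. X t \<omega> / sqrt (q t)) -` A' \<inter> space M)
      = emeasure (distr M borel (\<lambda>\<omega>. X t \<omega> / sqrt (q t))) A'"
    using A' by (subst emeasure_distr) auto
  also have "\<dots> = 0" using A' distr_X_normalized_std_normal[OF assms(1)] by simp
  finally have "emeasure M ((\<lambda>\<omega>. X t \<omega> / sqrt (q t)) -` A' \<inter> space M) = 0" .
  then show ?thesis
    using A' by (intro AE_I[where N="(\<lambda>\<omega>. X t \<omega> / sqrt (q t)) -` A' \<inter> space M"])
      (auto simp: A'_def)
qed

lemma entire_vanishing_at_X_eq_0:
  assumes "0 < q t" and "f holomorphic_on UNIV"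
    and "AE \<omega> in M. f (complex_of_real (X t \<omega>)) = 0"
  shows "f z = 0"
proof (rule entire_eq_0_if_uncountable_real_zeros[OF assms(2)])
  show "uncountable {x::real. f (complex_of_real x) = 0}"
  proof
    assume "countable {x::real. f (complex_of_real x) = 0}"
    from AE_X_notin_countable[OF assms(1) this] assms(3) have "AE \<omega> in M. False"
      by eventually_elim simp
    then show False by simp
  qed
qed

lemma AE_sum_stoch_exp_eq_imp_D_eq:
  fixes l c m d :: "nat \<Rightarrow> complex" and A A' :: "nat set"
  assumes "AE \<omega> in M. (\<Sum>k\<in>A. l k * stoch_exp X q (c k) t \<omega>) = (\<Sum>k\<in>A'. m k * stoch_exp X q (d k) t \<omega>)"
  shows "AE \<omega> in M. (\<Sum>k\<in>A. l k * c k * complex_of_real (q t) * stoch_exp X q (c k) t \<omega>)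
    = (\<Sum>k\<in>A'. m k * d k * complex_of_real (q t) * stoch_exp X q (d k) t \<omega>)"
proof (cases "q t = 0")
  case True
  then show ?thesis by simp
next
  case False
  then have q_pos: "0 < q t" using q_t_nonneg by simp
  define Q where "Q = complex_of_real (q t)"
  define f where "f = (\<lambda>(l :: nat \<Rightarrow> complex) c (A :: nat set) z.
    \<Sum>k\<in>A. l k * exp (c k * z - (c k)\<^sup>2 * Q / 2))"
  define f' where "f' = (\<lambda>(l :: nat \<Rightarrow> complex) c (A :: nat set) z.
    \<Sum>k\<in>A. l k * c k * exp (c k * z - (c k)\<^sup>2 * Q / 2))"
  have stoch_exp: "(\<Sum>k\<in>A. l k * stoch_exp X q (c k) t \<omega>) = f l c A (complex_of_real (X t \<omega>))"
    "(\<Sum>k\<in>A. l k * c k * Q * stoch_exp X q (c k) t \<omega>) = Q * f' l c A (complex_of_real (X t \<omega>))"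
    for l c :: "nat \<Rightarrow> complex" and A \<omega>
    unfolding f_def f'_def stoch_exp_def Q_def by (simp_all add: sum_distrib_left ac_simps)
  have "(\<lambda>z. f l c A z - f m d A' z) holomorphic_on UNIV"
    unfolding f_def by (intro holomorphic_intros)
  moreover have "AE \<omega> in M. f l c A (complex_of_real (X t \<omega>)) - f m d A' (complex_of_real (X t \<omega>)) = 0"
    using assms by (simp add: stoch_exp(1))
  ultimately have "f l c A z - f m d A' z = 0" for z
    by (rule entire_vanishing_at_X_eq_0[OF q_pos])
  then have "((\<lambda>z. f l c A z - f m d A' z) has_field_derivative 0) (at z)" for z
    by simp
  moreover have "((\<lambda>z. f l c A z - f m d A' z) has_field_derivative f' l c A z - f' m d A' z) (at z)" for z
    unfolding f_def f'_def by (intro derivative_intros has_field_derivative_sum_exp)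
  ultimately have "f' l c A z = f' m d A' z" for z
    using DERIV_unique by fastforce
  then show ?thesis unfolding Q_def[symmetric] stoch_exp(2) by simp
qed

end

lemma det_qv_martingaleI:
  assumes "prob_space M" "time_index I" "filtration M I F" "sq_int_cont_martingale M I F X"
    and "deterministic_qv M I F X q" "t \<in> I"
  shows "det_qv_martingale M F X q t"
proof -
  have I: "{0..t} \<subseteq> I" and t: "0 \<le> t"
    using assms(2,6) unfolding time_index_def by auto
  have in_I: "s \<in> I" if "0 \<le> s" "s \<le> t" for s using I that by auto
  have F: "\<forall>t\<in>I. subalgebra M (F t)" "\<forall>s\<in>I. \<forall>t\<in>I. s \<le> t \<longrightarrow> sets (F s) \<subseteq> sets (F t)"
    using assms(3) unfolding filtration_def by auto
  have X: "martingale M I F X" "\<forall>t\<in>I. integrable M (\<lambda>\<omega>. (X t \<omega>)\<^sup>2)"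
    "AE \<omega> in M. continuous_on I (\<lambda>t. X t \<omega>)" "AE \<omega> in M. X 0 \<omega> = 0"
    using assms(4) unfolding sq_int_cont_martingale_def by auto
  have q: "q 0 = 0" "continuous_on I q" "mono_on I q" "martingale M I F (\<lambda>t \<omega>. (X t \<omega>)\<^sup>2 - q t)"
    using assms(5) unfolding deterministic_qv_def by auto
  show ?thesis
  proof (intro det_qv_martingale.intro det_qv_martingale_axioms.intro)
    show "prob_space M" by (rule assms(1))
    show "0 \<le> t" by (rule t)
    show "subalgebra M (F s)" if "0 \<le> s" "s \<le> t" for s using F(1) in_I that by auto
    show "sets (F s) \<subseteq> sets (F r)" if "0 \<le> s" "s \<le> r" "r \<le> t" for s r
      using F(2) in_I that by auto
    show "X s \<in> borel_measurable (F s)" if "0 \<le> s" "s \<le> t" for s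
      using X(1) in_I that unfolding martingale_def by auto
    show "integrable M (\<lambda>\<omega>. (X s \<omega>)\<^sup>2)" if "0 \<le> s" "s \<le> t" for s
      using X(2) in_I that by auto
    show "AE \<omega> in M. real_cond_exp M (F s) (X r) \<omega> = X s \<omega>" if "0 \<le> s" "s \<le> r" "r \<le> t" for s r
      using X(1) in_I that unfolding martingale_def by (meson order_trans)
    show "AE \<omega> in M. real_cond_exp M (F s) (\<lambda>\<omega>. (X r \<omega>)\<^sup>2 - q r) \<omega> = (X s \<omega>)\<^sup>2 - q s"
      if "0 \<le> s" "s \<le> r" "r \<le> t" for s r
      using q(4) in_I that unfolding martingale_def by (meson order_trans)
    show "AE \<omega> in M. continuous_on {0..t} (\<lambda>s. X s \<omega>)"
      using X(3) by eventually_elim (rule continuous_on_subset[OF _ I])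
    show "AE \<omega> in M. X 0 \<omega> = 0" by (rule X(4))
    show "q 0 = 0" by (rule q(1))
    show "continuous_on {0..t} q" by (rule continuous_on_subset[OF q(2) I])
    show "q s \<le> q r" if "0 \<le> s" "s \<le> r" "r \<le> t" for s r
      using q(3) in_I that by (meson mono_onD order_trans)
  qed
qed

theorem mainTheorem5:
  fixes M :: "'a measure" and I :: "real set" and F :: "real \<Rightarrow> 'a measure"
    and X :: "real \<Rightarrow> 'a \<Rightarrow> real" and q :: "real \<Rightarrow> real" and t :: real
  assumes "prob_space M"
    and "time_index I"
    and "filtration M I F"
    and "sq_int_cont_martingale M I F X"
    and "deterministic_qv M I F X q"
    and "t \<in> I"
  shows
    "(\<forall>(N::nat) (l::nat \<Rightarrow> complex) (c::nat \<Rightarrow> complex).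
        N \<ge> 1 \<longrightarrow> inj_on c {1..N} \<longrightarrow>
        (AE \<omega> in M. (\<Sum>k=1..N. l k * stoch_exp X q (c k) t \<omega>) = 0) \<longrightarrow>
        (AE \<omega> in M. (\<Sum>k=1..N. l k * c k * complex_of_real (q t) * stoch_exp X q (c k) t \<omega>) = 0))
     \<and>
     (\<forall>(N::nat) (l::nat \<Rightarrow> complex) (c::nat \<Rightarrow> complex)
       (N'::nat) (m::nat \<Rightarrow> complex) (d::nat \<Rightarrow> complex).
        (AE \<omega> in M. (\<Sum>k=1..N. l k * stoch_exp X q (c k) t \<omega>)
                   = (\<Sum>k=1..N'. m k * stoch_exp X q (d k) t \<omega>)) \<longrightarrow>
        (AE \<omega> in M. (\<Sum>k=1..N. l k * c k * complex_of_real (q t) * stoch_exp X q (c k) t \<omega>)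
                   = (\<Sum>k=1..N'. m k * d k * complex_of_real (q t) * stoch_exp X q (d k) t \<omega>)))"
proof -
  interpret det_qv_martingale M F X q t
    using det_qv_martingaleI[OF assms] .
  show ?thesis
  proof (intro conjI allI impI)
    fix N :: nat and l c :: "nat \<Rightarrow> complex"
    assume "AE \<omega> in M. (\<Sum>k=1..N. l k * stoch_exp X q (c k) t \<omega>) = 0"
    then show "AE \<omega> in M. (\<Sum>k=1..N. l k * c k * complex_of_real (q t) * stoch_exp X q (c k) t \<omega>) = 0"
      using AE_sum_stoch_exp_eq_imp_D_eq[where A'="{}"] by simp
  qed (rule AE_sum_stoch_exp_eq_imp_D_eq)
qed

end
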